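(* The group $G$ has exactly two orbits on the planes of $\mathcal W(5,q)$ through $N$: an orbit of size $q^2+1$ consisting of the planes meeting $\mathcal Q$ in a line of $\mathcal S$, and an orbit of size $q^3+q$ consisting of the planes meeting $\mathcal Q$ in a non-degenerate conic.
   Context: Let $q$ be an even prime power and $\mathrm{PG}(5,q^2)$ have homogeneous coordinates $(X_1,\dots,X_6)$, points written as column vectors. Let $\Sigma$ be the set of points having a coordinate vector $(\alpha,\alpha^q,\delta_0,\beta,\beta^q,\delta_1)$ with $\alpha,\beta\in\mathbb F_{q^2}$, $\delta_0,\delta_1\in\mathbb F_q$ (a Baer subgeometry $\cong\mathrm{PG}(5,q)$). Let $\Pi=\Sigma\cap\{X_6=0\}$, $\mathcal Q=\Sigma\cap\{X_6=0,\ X_3^2+X_1X_5+X_2X_4=0\}$ (a parabolic quadric $\mathcal Q(4,q)$ of $\Pi$) with nucleus $N=(0,0,1,0,0,0)$. Fix $\omega\in\mathbb F_{q^2}\setminus\mathbb F_q$ with $\omega+\omega^q=1$ and let $h(X,Y)=\omega X_1Y_4^q+\omega^qX_1Y_6^q+\omega^qX_2Y_5^q+\omega X_2Y_6^q+X_3Y_6^q+\omega^qX_4Y_1^q+\omega X_5Y_2^q+\omega X_6Y_1^q+\omega^qX_6Y_2^q+X_6Y_3^q$. Restricted to $\Sigma$, $P\perp R\iff h(P,R)=0$ defines a symplectic polarity $\perp$ of $\Sigma$; $\mathcal W(5,q)$ is the associated symplectic polar space (so $N^\perp=\Pi$). For $a,b,c,d\in\mathbb F_{q^2}$ with $ad+bc=1$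 let $M_{a,b,c,d}$ be the $6\times6$ matrix with rows $(a^2,0,0,0,c^2,\tfrac{c(a+c\omega^q)}{\omega})$, $(0,a^{2q},0,c^{2q},0,\tfrac{c^q(a^q+c^q\omega)}{\omega^q})$, $(ab,a^qb^q,1,c^qd^q,cd,\tfrac{d(a+c\omega^q)}{\omega}+\tfrac{d^q(a^q+c^q\omega)}{\omega^q}+\tfrac{1}{\omega^{q+1}})$, $(0,b^{2q},0,d^{2q},0,\tfrac{d^q(b^q+d^q\omega)+\omega}{\omega^q})$, $(b^2,0,0,0,d^2,\tfrac{d(b+d\omega^q)+\omega^q}{\omega})$, $(0,0,0,0,0,1)$, and let $G\cong\mathrm{PSL}(2,q^2)$ be the group of projectivities $X\mapsto M_{a,b,c,d}X$; $G$ stabilizes $\Sigma,\Pi,\mathcal Q,N$ and $\perp$. Let $\mathcal S$ be the set of the $q^2+1$ lines $S_t=\{(\lambda,\lambda^q,\lambda t+\lambda^qt^q,\lambda^qt^{2q},\lambda t^2,0):\lambda\in\mathbb F_{q^2}^*\}$, $t\in\mathbb F_{q^2}$, and $S_\infty=\{(0,0,0,\lambda^q,\lambda,0):\lambda\in\mathbb F_{q^2}^*\}$; these are lines of $\mathcal W(5,q)$ contained in $\mathcal Q$ and form a line spread of $\mathcal Q$. *)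

theory Defs
  imports Main
begin

text \<open>Vectors of the 6-dimensional space over the field 'a are functions nat => 'a;
  coordinate X_i is the value at i (i = 1..6), all other values are 0.\<close>

definition mk6 :: "'a::zero \<Rightarrow> 'a \<Rightarrow> 'a \<Rightarrow> 'a \<Rightarrow> 'a \<Rightarrow> 'a \<Rightarrow> nat \<Rightarrow> 'a" where
  "mk6 a1 a2 a3 a4 a5 a6 = (\<lambda>i. if i = 1 then a1 else if i = 2 then a2 else if i = 3 then a3
      else if i = 4 then a4 else if i = 5 then a5 else if i = 6 then a6 else 0)"

definition pt :: "(nat \<Rightarrow> 'a::field) \<Rightarrow> (nat \<Rightarrow> 'a) set" where
  "pt v = {(\<lambda>i. c * v i) | c. c \<noteq> 0}"

definition Fq :: "nat \<Rightarrow> 'a::field set" where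
  "Fq q = {x. x ^ q = x}"

definition SigmaVecs :: "nat \<Rightarrow> (nat \<Rightarrow> 'a::field) set" where
  "SigmaVecs q = {mk6 \<alpha> (\<alpha> ^ q) d0 \<beta> (\<beta> ^ q) d1 | \<alpha> \<beta> d0 d1. d0 \<in> Fq q \<and> d1 \<in> Fq q}"

definition SigmaPts :: "nat \<Rightarrow> (nat \<Rightarrow> 'a::field) set set" where
  "SigmaPts q = {pt v | v. v \<in> SigmaVecs q \<and> v \<noteq> (\<lambda>_. 0)}"

definition lin3 :: "(nat \<Rightarrow> 'a::field) \<Rightarrow> (nat \<Rightarrow> 'a) \<Rightarrow> (nat \<Rightarrow> 'a) \<Rightarrow> 'a \<Rightarrow> 'a \<Rightarrow> 'a \<Rightarrow> nat \<Rightarrow> 'a" where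
  "lin3 u v w a b c = (\<lambda>i. a * u i + b * v i + c * w i)"

definition fq_indep :: "nat \<Rightarrow> (nat \<Rightarrow> 'a::field) \<Rightarrow> (nat \<Rightarrow> 'a) \<Rightarrow> (nat \<Rightarrow> 'a) \<Rightarrow> bool" where
  "fq_indep q u v w \<longleftrightarrow> (\<forall>a b c. a \<in> Fq q \<and> b \<in> Fq q \<and> c \<in> Fq q \<and> lin3 u v w a b c = (\<lambda>_. 0)
       \<longrightarrow> a = 0 \<and> b = 0 \<and> c = 0)"

definition plane_span :: "nat \<Rightarrow> (nat \<Rightarrow> 'a::field) \<Rightarrow> (nat \<Rightarrow> 'a) \<Rightarrow> (nat \<Rightarrow> 'a) \<Rightarrow> (nat \<Rightarrow> 'a) set set" where
  "plane_span q u v w = {pt (lin3 u v w a b c) | a b c.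
      a \<in> Fq q \<and> b \<in> Fq q \<and> c \<in> Fq q \<and> \<not> (a = 0 \<and> b = 0 \<and> c = 0)}"

definition SigmaPlanes :: "nat \<Rightarrow> (nat \<Rightarrow> 'a::field) set set set" where
  "SigmaPlanes q = {plane_span q u v w | u v w.
      u \<in> SigmaVecs q \<and> v \<in> SigmaVecs q \<and> w \<in> SigmaVecs q \<and> fq_indep q u v w}"

definition hform :: "nat \<Rightarrow> 'a::field \<Rightarrow> (nat \<Rightarrow> 'a) \<Rightarrow> (nat \<Rightarrow> 'a) \<Rightarrow> 'a" where
  "hform q \<omega> X Y =
     \<omega> * X 1 * Y 4 ^ q + \<omega> ^ q * X 1 * Y 6 ^ q + \<omega> ^ q * X 2 * Y 5 ^ q + \<omega> * X 2 * Y 6 ^ q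
     + X 3 * Y 6 ^ q + \<omega> ^ q * X 4 * Y 1 ^ q + \<omega> * X 5 * Y 2 ^ q + \<omega> * X 6 * Y 1 ^ q
     + \<omega> ^ q * X 6 * Y 2 ^ q + X 6 * Y 3 ^ q"

definition perp :: "nat \<Rightarrow> 'a::field \<Rightarrow> (nat \<Rightarrow> 'a) set \<Rightarrow> (nat \<Rightarrow> 'a) set \<Rightarrow> bool" where
  "perp q \<omega> P R \<longleftrightarrow> (\<forall>x\<in>P. \<forall>y\<in>R. hform q \<omega> x y = 0)"

definition Npt :: "(nat \<Rightarrow> 'a::field) set" where
  "Npt = pt (mk6 0 0 1 0 0 0)"

definition WPlanesN :: "nat \<Rightarrow> 'a::field \<Rightarrow> (nat \<Rightarrow> 'a) set set set" where
  "WPlanesN q \<omega> = {\<pi> \<in> SigmaPlanes q. (\<forall>P\<in>\<pi>. \<forall>R\<in>\<pi>. perp q \<omega> P R) \<and> Npt \<in> \<pi>}"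

definition Qpts :: "nat \<Rightarrow> (nat \<Rightarrow> 'a::field) set set" where
  "Qpts q = {P \<in> SigmaPts q. \<forall>x\<in>P. x 6 = 0 \<and> x 3 ^ 2 + x 1 * x 5 + x 2 * x 4 = 0}"

definition Sline :: "nat \<Rightarrow> 'a::field \<Rightarrow> (nat \<Rightarrow> 'a) set set" where
  "Sline q t = {pt (mk6 l (l ^ q) (l * t + l ^ q * t ^ q) (l ^ q * t ^ (2 * q)) (l * t ^ 2) 0) | l. l \<noteq> 0}"

definition Sline_inf :: "nat \<Rightarrow> (nat \<Rightarrow> 'a::field) set set" where
  "Sline_inf q = {pt (mk6 0 0 0 (l ^ q) l 0) | l. l \<noteq> 0}"

definition Spread :: "nat \<Rightarrow> (nat \<Rightarrow> 'a::field) set set set" where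
  "Spread q = insert (Sline_inf q) (range (Sline q))"

text \<open>Ternary quadratic form with coefficients in F_q and its non-singularity
  (no nonzero singular vector: zero of the form lying in the radical of the polar form).\<close>
definition qf3 :: "'a::field \<Rightarrow> 'a \<Rightarrow> 'a \<Rightarrow> 'a \<Rightarrow> 'a \<Rightarrow> 'a \<Rightarrow> 'a \<Rightarrow> 'a \<Rightarrow> 'a \<Rightarrow> 'a" where
  "qf3 c1 c2 c3 c4 c5 c6 x y z = c1 * x ^ 2 + c2 * y ^ 2 + c3 * z ^ 2 + c4 * x * y + c5 * x * z + c6 * y * z"

definition qf3_nonsingular :: "nat \<Rightarrow> 'a::field \<Rightarrow> 'a \<Rightarrow> 'a \<Rightarrow> 'a \<Rightarrow> 'a \<Rightarrow> 'a \<Rightarrow> bool" where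
  "qf3_nonsingular q c1 c2 c3 c4 c5 c6 \<longleftrightarrow>
     (\<forall>x y z. x \<in> Fq q \<and> y \<in> Fq q \<and> z \<in> Fq q \<and> \<not> (x = 0 \<and> y = 0 \<and> z = 0)
        \<and> qf3 c1 c2 c3 c4 c5 c6 x y z = 0 \<longrightarrow>
        (\<exists>x' y' z'. x' \<in> Fq q \<and> y' \<in> Fq q \<and> z' \<in> Fq q \<and>
           qf3 c1 c2 c3 c4 c5 c6 (x + x') (y + y') (z + z') - qf3 c1 c2 c3 c4 c5 c6 x y z
             - qf3 c1 c2 c3 c4 c5 c6 x' y' z' \<noteq> 0))"

definition nondeg_conic_in :: "nat \<Rightarrow> (nat \<Rightarrow> 'a::field) set set \<Rightarrow> (nat \<Rightarrow> 'a) set set \<Rightarrow> bool" where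
  "nondeg_conic_in q \<pi> C \<longleftrightarrow>
     (\<exists>u v w c1 c2 c3 c4 c5 c6.
        u \<in> SigmaVecs q \<and> v \<in> SigmaVecs q \<and> w \<in> SigmaVecs q \<and> fq_indep q u v w \<and>
        \<pi> = plane_span q u v w \<and>
        c1 \<in> Fq q \<and> c2 \<in> Fq q \<and> c3 \<in> Fq q \<and> c4 \<in> Fq q \<and> c5 \<in> Fq q \<and> c6 \<in> Fq q \<and>
        qf3_nonsingular q c1 c2 c3 c4 c5 c6 \<and>
        C = {pt (lin3 u v w x y z) | x y z. x \<in> Fq q \<and> y \<in> Fq q \<and> z \<in> Fq q \<and>
               \<not> (x = 0 \<and> y = 0 \<and> z = 0) \<and> qf3 c1 c2 c3 c4 c5 c6 x y z = 0})"

definition Mmat :: "nat \<Rightarrow> 'a::field \<Rightarrow> 'a \<Rightarrow> 'a \<Rightarrow> 'a \<Rightarrow> 'a \<Rightarrow> nat \<Rightarrow> nat \<Rightarrow> 'a" where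
  "Mmat q \<omega> a b c d = (\<lambda>i.
     if i = 1 then mk6 (a ^ 2) 0 0 0 (c ^ 2) (c * (a + c * \<omega> ^ q) / \<omega>)
     else if i = 2 then mk6 0 (a ^ (2 * q)) 0 (c ^ (2 * q)) 0 (c ^ q * (a ^ q + c ^ q * \<omega>) / \<omega> ^ q)
     else if i = 3 then mk6 (a * b) (a ^ q * b ^ q) 1 (c ^ q * d ^ q) (c * d)
        (d * (a + c * \<omega> ^ q) / \<omega> + d ^ q * (a ^ q + c ^ q * \<omega>) / \<omega> ^ q + 1 / \<omega> ^ (q + 1))
     else if i = 4 then mk6 0 (b ^ (2 * q)) 0 (d ^ (2 * q)) 0 ((d ^ q * (b ^ q + d ^ q * \<omega>) + \<omega>) / \<omega> ^ q)
     else if i = 5 then mk6 (b ^ 2) 0 0 0 (d ^ 2) ((d * (b + d * \<omega> ^ q) + \<omega> ^ q) / \<omega>)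
     else if i = 6 then mk6 0 0 0 0 0 1
     else (\<lambda>_. 0))"

definition mat_app :: "(nat \<Rightarrow> nat \<Rightarrow> 'a::field) \<Rightarrow> (nat \<Rightarrow> 'a) \<Rightarrow> nat \<Rightarrow> 'a" where
  "mat_app M v = (\<lambda>i. if 1 \<le> i \<and> i \<le> 6 then (\<Sum>j = 1..6. M i j * v j) else 0)"

definition act_pt :: "(nat \<Rightarrow> nat \<Rightarrow> 'a::field) \<Rightarrow> (nat \<Rightarrow> 'a) set \<Rightarrow> (nat \<Rightarrow> 'a) set" where
  "act_pt M P = mat_app M ` P"

definition Gmats :: "nat \<Rightarrow> 'a::field \<Rightarrow> (nat \<Rightarrow> nat \<Rightarrow> 'a) set" where
  "Gmats q \<omega> = {Mmat q \<omega> a b c d | a b c d. a * d + b * c = 1}"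

definition Gorbit :: "nat \<Rightarrow> 'a::field \<Rightarrow> (nat \<Rightarrow> 'a) set set \<Rightarrow> (nat \<Rightarrow> 'a) set set set" where
  "Gorbit q \<omega> \<pi> = {act_pt M ` \<pi> | M. M \<in> Gmats q \<omega>}"

end

theory Submission
  imports Defs "HOL-Library.Cardinality"
begin

text \<open>Write the points of \<open>\<Pi>\<close> as \<open>(x, x^q, d, z^q, z, 0)\<close> with \<open>x, z \<in> F_{q^2}\<close>, \<open>d \<in> F_q\<close>. On them
  \<open>h\<close> becomes \<open>tr (\<omega> (x z' + x' z))\<close> and \<open>Q\<close> becomes \<open>d^2 = tr (x z)\<close>, where \<open>tr\<close> is the trace to \<open>F_q\<close>.
  So a plane of \<open>W(5,q)\<close> through \<open>N\<close> is \<open>N\<close> joined with a two-dimensional \<open>F_q\<close>-subspace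
  \<open>\<langle>u, v\<rangle>\<close> of \<open>F_{q^2}^2\<close> with \<open>tr (\<omega> det (u, v)) = 0\<close>, and it meets \<open>Q\<close> in exactly one point over each
  nonzero vector of \<open>\<langle>u, v\<rangle>\<close>, the one with \<open>d = sqrt (tr (x z))\<close>. If \<open>det (u, v) = 0\<close> the subspace is an
  \<open>F_{q^2}\<close>-line and the plane meets \<open>Q\<close> in a line of the spread; otherwise \<open>tr (det (u, v)) \<noteq> 0\<close>, and this is the
  coefficient that makes the intersection a non-degenerate conic.

  \<open>M_{a,b,c,d}\<close> acts on the pairs \<open>(x, z)\<close> by the matrix with entries \<open>a^2, c^2, b^2, d^2\<close>, that is as
  \<open>SL(2, q^2)\<close>. This action preserves \<open>det\<close> and is transitive on pairs with a prescribed nonzero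
  determinant, so each kind of plane forms a single orbit. There are \<open>q^2 + 1\<close> line planes, one for
  each spread line, and each conic plane arises from exactly \<open>|SL(2, q)|\<close> of the \<open>|SL(2, q^2)|\<close> pairs
  with determinant \<open>1/\<omega>\<close>, which gives \<open>q^3 + q\<close> conic planes.\<close>

section \<open>Coordinates and projective points\<close>

lemma mk6_apply [simp]:
  "mk6 a1 a2 a3 a4 a5 a6 1 = a1" "mk6 a1 a2 a3 a4 a5 a6 (Suc 0) = a1" "mk6 a1 a2 a3 a4 a5 a6 2 = a2"
  "mk6 a1 a2 a3 a4 a5 a6 3 = a3" "mk6 a1 a2 a3 a4 a5 a6 4 = a4" "mk6 a1 a2 a3 a4 a5 a6 5 = a5"
  "mk6 a1 a2 a3 a4 a5 a6 6 = a6"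
  by (simp_all add: mk6_def)

lemma mk6_eq_iff:
  "mk6 a1 a2 a3 a4 a5 a6 = mk6 b1 b2 b3 b4 b5 b6 \<longleftrightarrow>
    a1 = b1 \<and> a2 = b2 \<and> a3 = b3 \<and> a4 = b4 \<and> a5 = b5 \<and> a6 = b6"
  (is "?L \<longleftrightarrow> ?R")
proof
  assume ?L
  hence "\<And>i. mk6 a1 a2 a3 a4 a5 a6 i = mk6 b1 b2 b3 b4 b5 b6 i" by simp
  from this[of 1] this[of 2] this[of 3] this[of 4] this[of 5] this[of 6] show ?R by simp
qed simp

lemma mk6_eq_zero_iff:
  "mk6 a1 a2 a3 a4 a5 a6 = (\<lambda>_. 0) \<longleftrightarrow> a1 = 0 \<and> a2 = 0 \<and> a3 = 0 \<and> a4 = 0 \<and> a5 = 0 \<and> a6 = 0"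
proof -
  have "(\<lambda>_. 0) = mk6 0 0 0 0 0 (0::'a)" by (simp add: mk6_def fun_eq_iff)
  thus ?thesis by (simp add: mk6_eq_iff)
qed

lemma mk6_smult:
  "(\<lambda>i. (k::'a::field) * mk6 a1 a2 a3 a4 a5 a6 i) = mk6 (k*a1) (k*a2) (k*a3) (k*a4) (k*a5) (k*a6)"
  by (simp add: mk6_def fun_eq_iff)

lemma lin3_mk6:
  "lin3 (mk6 u1 u2 u3 u4 u5 u6) (mk6 v1 v2 v3 v4 v5 v6) (mk6 w1 w2 w3 w4 w5 w6) a b c =
   mk6 (a*u1+b*v1+c*w1) (a*u2+b*v2+c*w2) (a*u3+b*v3+c*w3) (a*u4+b*v4+c*w4) (a*u5+b*v5+c*w5)
     (a*u6+b*v6+c*w6)"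
  by (simp add: mk6_def lin3_def fun_eq_iff)

lemma lin3_swap12: "lin3 u v x a b c = lin3 v u x b a c"
  by (simp add: lin3_def algebra_simps)

lemma lin3_swap13: "lin3 u v x a b c = lin3 x v u c b a"
  by (simp add: lin3_def algebra_simps)

lemma lin3_lin3_first:
  "lin3 (lin3 u v x a b c) v x \<alpha> \<beta> \<gamma> = lin3 u v x (\<alpha> * a) (\<alpha> * b + \<beta>) (\<alpha> * c + \<gamma>)"
  by (simp add: lin3_def fun_eq_iff algebra_simps)

lemma lin3_add:
  "(\<lambda>i. b * lin3 u v x a1 a2 a3 i + c * lin3 u v x e1 e2 e3 i) =
   lin3 u v x (b*a1+c*e1) (b*a2+c*e2) (b*a3+c*e3)"
  by (simp add: lin3_def fun_eq_iff algebra_simps)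

lemma plane_span_swap12: "plane_span q u v x = plane_span q v u x"
  unfolding plane_span_def by (simp only: lin3_swap12[of u v x]) blast

lemma plane_span_swap13: "plane_span q u v x = plane_span q x v u"
  unfolding plane_span_def by (simp only: lin3_swap13[of u v x]) blast

lemma plane_span_swap23: "plane_span q u v x = plane_span q u x v"
  by (metis plane_span_swap12 plane_span_swap13)

lemma fq_indep_swap12: "fq_indep q u v x = fq_indep q v u x"
  unfolding fq_indep_def by (simp only: lin3_swap12[of u v x]) blast

lemma fq_indep_swap13: "fq_indep q u v x = fq_indep q x v u"
  unfolding fq_indep_def by (simp only: lin3_swap13[of u v x]) blast

lemma fq_indep_swap23: "fq_indep q u v x = fq_indep q u x v"
  by (metis fq_indep_swap12 fq_indep_swap13)

lemma pt_mem: "x \<in> pt v \<longleftrightarrow> (\<exists>c. c \<noteq> 0 \<and> x = (\<lambda>i. c * v i))"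
  unfolding pt_def by auto

lemma pt_self: "v \<in> pt v"
  unfolding pt_mem by (rule exI[of _ 1]) simp

lemma pt_eq_imp_smult: "pt v = pt v' \<Longrightarrow> \<exists>k. k \<noteq> 0 \<and> v = (\<lambda>i. k * v' i)"
  by (metis pt_mem pt_self)

lemma sum_1_6:
  "(\<Sum>j = 1..6. (f :: nat \<Rightarrow> 'b) j) = f 1 + f 2 + f 3 + f 4 + f 5 + (f 6 :: 'b::comm_monoid_add)"
proof -
  have "{1..6::nat} = {1,2,3,4,5,6}" by auto
  thus ?thesis by (simp add: add.assoc)
qed

lemma mat_app_smult: "mat_app M (\<lambda>i. k * v i) = (\<lambda>i. k * mat_app M v i)"
  by (simp add: mat_app_def fun_eq_iff sum_distrib_left algebra_simps)

lemma act_pt_pt: "act_pt M (pt v) = pt (mat_app M v)"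
  unfolding act_pt_def pt_def by (auto simp: mat_app_smult[symmetric])

lemma card_eq_card_image_mult:
  assumes "finite A" "\<And>y. y \<in> f ` A \<Longrightarrow> card {x \<in> A. f x = y} = k"
  shows "card A = card (f ` A) * k"
proof -
  have "card A = card (\<Union>y\<in>f ` A. {x \<in> A. f x = y})" by (rule arg_cong[where f=card]) blast
  also have "\<dots> = (\<Sum>y\<in>f ` A. card {x \<in> A. f x = y})" by (rule card_UN_disjoint) (use assms(1) in auto)
  also have "\<dots> = card (f ` A) * k" using assms(2) by simp
  finally show ?thesis .
qed

section \<open>The fields \<open>F_q \<subseteq> F_{q^2}\<close> in characteristic 2\<close>

locale w5q =
  fixes q n :: nat and w :: "'a::{field,finite}"
  assumes n_ge_1: "n \<ge> 1" and q_eq: "q = 2 ^ n" and card_UNIV_eq: "card (UNIV :: 'a set) = q ^ 2"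
    and w_notin_Fq: "w \<notin> Fq q" and w_plus_w_q: "w + w ^ q = 1"
begin

abbreviation FQ :: "'a set" where "FQ \<equiv> Fq q"

text \<open>Summing \<open>1 + y\<close> over all \<open>y\<close> shows that \<open>|F|\<close>, a power of 2, vanishes in \<open>F\<close>.\<close>

lemma two_eq_zero: "(2::'a) = 0"
proof -
  have "(+) (1::'a) ` UNIV = UNIV"
    by (simp add: surj_def)
  hence "(\<Sum>y\<in>(UNIV::'a set). y) = (\<Sum>y\<in>(+) 1 ` UNIV. y)" by simp
  also have "\<dots> = (\<Sum>y\<in>UNIV. 1 + y)" by (subst sum.reindex) (auto simp: inj_on_def)
  also have "\<dots> = of_nat (card (UNIV::'a set)) + (\<Sum>y\<in>UNIV. y)" by (simp add: sum.distrib)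
  finally have "of_nat (card (UNIV::'a set)) = (0::'a)" by simp
  hence "(2::'a) ^ (2 * n) = 0" using card_UNIV_eq q_eq by (simp add: power_mult[symmetric] mult.commute)
  thus ?thesis by simp
qed

lemma add_self_eq_0 [simp]: "(x::'a) + x = 0"
  by (simp add: mult_2[symmetric] two_eq_zero)

lemma uminus_eq_self [simp]: "- (x::'a) = x"
  using add_self_eq_0[of x] unfolding add_eq_0_iff by simp

lemma add_eq_0_iff_eq: "(x::'a) + y = 0 \<longleftrightarrow> x = y"
  unfolding add_eq_0_iff by auto

lemma square_add: "((x::'a) + y) ^ 2 = x ^ 2 + y ^ 2"
  unfolding power2_sum by (simp add: two_eq_zero)

lemma power_two_power_add: "((x::'a) + y) ^ (2 ^ k) = x ^ (2 ^ k) + y ^ (2 ^ k)"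
proof (induction k)
  case (Suc k)
  have "(x + y) ^ (2 ^ Suc k) = ((x + y) ^ (2 ^ k)) ^ 2" by (simp add: power_mult[symmetric] mult.commute)
  also have "\<dots> = (x ^ (2 ^ k)) ^ 2 + (y ^ (2 ^ k)) ^ 2" using Suc by (simp add: square_add)
  also have "\<dots> = x ^ (2 ^ Suc k) + y ^ (2 ^ Suc k)" by (simp add: power_mult[symmetric] mult.commute)
  finally show ?case .
qed simp

lemma frobenius_add: "((x::'a) + y) ^ q = x ^ q + y ^ q"
  using power_two_power_add q_eq by simp

lemma q_ge_2: "q \<ge> 2"
proof -
  have "(2::nat) ^ 1 \<le> 2 ^ n" using n_ge_1 by (intro power_increasing) auto
  thus ?thesis using q_eq by simp
qed

lemma zero_power_q [simp]: "(0::'a) ^ q = 0"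
  using q_ge_2 by simp

lemma power_card_minus_1:
  assumes "(x::'a) \<noteq> 0" shows "x ^ (card (UNIV::'a set) - 1) = 1"
proof -
  let ?A = "UNIV - {0::'a}"
  have bij: "(*) x ` ?A = ?A"
  proof
    show "?A \<subseteq> (*) x ` ?A"
    proof
      fix y assume "y \<in> ?A"
      hence "y = x * (y / x)" "y / x \<in> ?A" using assms by auto
      thus "y \<in> (*) x ` ?A" by blast
    qed
  qed (use assms in auto)
  have "prod (\<lambda>y. y) ?A = prod (\<lambda>y. y) ((*) x ` ?A)" using bij by simp
  also have "\<dots> = prod (\<lambda>y. x * y) ?A" using assms by (subst prod.reindex) (auto simp: inj_on_def)
  also have "\<dots> = x ^ card ?A * prod (\<lambda>y. y) ?A" by (simp add: prod.distrib)
  finally have "x ^ card ?A = 1" by (simp add: prod_zero_iff)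
  thus ?thesis by (simp add: card_Diff_singleton)
qed

lemma power_q_q: "(x::'a) ^ (q * q) = x"
proof (cases "x = 0")
  case False
  have "card (UNIV::'a set) = Suc (card (UNIV::'a set) - 1)" using card_UNIV_eq q_ge_2 by simp
  hence "x ^ (q * q) = x ^ Suc (card (UNIV::'a set) - 1)" using card_UNIV_eq by (simp add: power2_eq_square)
  also have "\<dots> = x * x ^ (card (UNIV::'a set) - 1)" by (rule power_Suc)
  also have "\<dots> = x" using power_card_minus_1[OF False] by simp
  finally show ?thesis .
qed (use q_ge_2 in simp)

lemma frobenius_frobenius [simp]: "((x::'a) ^ q) ^ q = x"
  by (simp add: power_mult[symmetric] power_q_q)

lemma mem_Fq: "(x::'a) \<in> FQ \<longleftrightarrow> x ^ q = x"
  by (simp add: Fq_def)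

lemma Fq_0 [simp]: "0 \<in> FQ" and Fq_1 [simp]: "1 \<in> FQ"
  by (auto simp: mem_Fq)

lemma Fq_add [simp]: "x \<in> FQ \<Longrightarrow> y \<in> FQ \<Longrightarrow> x + y \<in> FQ"
  by (simp add: mem_Fq frobenius_add)

lemma Fq_mult [simp]: "x \<in> FQ \<Longrightarrow> y \<in> FQ \<Longrightarrow> x * y \<in> FQ"
  by (simp add: mem_Fq power_mult_distrib)

lemma Fq_inverse [simp]: "x \<in> FQ \<Longrightarrow> inverse x \<in> FQ"
  by (simp add: mem_Fq power_inverse)

lemma Fq_divide [simp]: "x \<in> FQ \<Longrightarrow> y \<in> FQ \<Longrightarrow> x / y \<in> FQ"
  by (simp add: mem_Fq power_divide)

lemma Fq_power_q [simp]: "x \<in> FQ \<Longrightarrow> x ^ q = x"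
  by (simp add: mem_Fq)

lemma Fq_power [simp]: assumes "x \<in> FQ" shows "x ^ k \<in> FQ"
proof -
  have "(x ^ k) ^ q = (x ^ q) ^ k" by (simp add: power_mult[symmetric] mult.commute)
  thus ?thesis using assms by (simp add: mem_Fq)
qed

definition tr :: "'a \<Rightarrow> 'a" where "tr x = x + x ^ q"

lemma tr_Fq [simp]: "tr x \<in> FQ"
  by (simp add: tr_def mem_Fq frobenius_add add.commute)

lemma tr_add: "tr (x + y) = tr x + tr y"
  by (simp add: tr_def frobenius_add algebra_simps)

lemma tr_smult: "c \<in> FQ \<Longrightarrow> tr (c * x) = c * tr x"
  by (simp add: tr_def power_mult_distrib algebra_simps)

lemma tr_eq_0_iff: "tr x = 0 \<longleftrightarrow> x \<in> FQ"
  unfolding tr_def mem_Fq add_eq_0_iff_eq by auto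

lemma tr_0 [simp]: "tr 0 = 0" and tr_1 [simp]: "tr 1 = 0"
  by (simp_all add: tr_def)

lemma tr_w: "tr w = 1"
  using w_plus_w_q by (simp add: tr_def)

lemma square_inj:
  assumes "(x::'a) ^ 2 = y ^ 2" shows "x = y"
proof -
  have "(x + y) ^ 2 = 0" using assms by (simp add: square_add)
  thus ?thesis by (simp add: add_eq_0_iff_eq)
qed

text \<open>In characteristic 2 squaring is a field automorphism; \<open>sqroot\<close> is its inverse.\<close>

definition sqroot :: "'a \<Rightarrow> 'a" where "sqroot x = x ^ (2 ^ (2 * n - 1))"

lemma sqroot_square [simp]: "(sqroot x) ^ 2 = x"
proof -
  have e: "2 * n = Suc (2 * n - 1)" using n_ge_1 by simp
  have "(2::nat) ^ (2 * n - 1) * 2 = 2 ^ (2 * n)" by (subst (2) e) simp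
  hence "(sqroot x) ^ 2 = x ^ (2 ^ (2 * n))" by (simp add: sqroot_def power_mult[symmetric])
  also have "\<dots> = x ^ (q * q)" by (simp add: q_eq power_mult[symmetric] mult_2 power_add)
  finally show ?thesis by (simp add: power_q_q)
qed

lemma sqroot_unique: "y ^ 2 = x \<Longrightarrow> y = sqroot x"
  by (rule square_inj) simp

lemma sqroot_add: "sqroot (x + y) = sqroot x + sqroot y"
  by (simp add: sqroot_def power_two_power_add)

lemma sqroot_mult: "sqroot (x * y) = sqroot x * sqroot y"
  by (simp add: sqroot_def power_mult_distrib)

lemma sqroot_0 [simp]: "sqroot 0 = 0" and sqroot_1 [simp]: "sqroot 1 = 1"
  by (simp_all add: sqroot_def)

lemma sqroot_Fq [simp]: "x \<in> FQ \<Longrightarrow> sqroot x \<in> FQ"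
  by (simp add: sqroot_def)

lemma sqroot_tr_square: "sqroot (tr (x ^ 2)) = tr x"
  by (rule sqroot_unique[symmetric]) (simp add: tr_def square_add power_mult[symmetric] mult.commute)

lemma w_nonzero [simp]: "w \<noteq> 0"
  using w_notin_Fq by auto

lemma Fq_basis_indep:
  assumes "lam \<notin> FQ" "a \<in> FQ" "b \<in> FQ" "a + b * lam = 0" shows "a = 0 \<and> b = 0"
proof (cases "b = 0")
  case False
  have "lam = a / b" using assms(4) False by (simp add: add_eq_0_iff_eq field_simps)
  thus ?thesis using assms False by simp
qed (use assms in simp)

lemma inj_on_Fq_basis:
  assumes "lam \<notin> FQ"
  shows "inj_on (\<lambda>(a, b). a + b * lam) (FQ \<times> FQ)"
proof (rule inj_onI, clarsimp)
  fix a b a' b' assume h: "a \<in> FQ" "b \<in> FQ" "a' \<in> FQ" "b' \<in> FQ" "a + b * lam = a' + b' * lam"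
  hence "(a + b * lam) + (a' + b' * lam) = 0" by simp
  hence "(a + a') + (b + b') * lam = 0" by (simp add: algebra_simps)
  from Fq_basis_indep[OF assms _ _ this] h show "a = a' \<and> b = b'" by (simp add: add_eq_0_iff_eq)
qed

text \<open>\<open>x \<mapsto> (tr x, tr (w x))\<close> is injective, which bounds \<open>|F_q|\<close> from below.\<close>

lemma card_Fq: "card FQ = q"
proof -
  let ?c = "card FQ"
  have inj: "inj (\<lambda>x. (tr x, tr (w * x)))"
  proof (rule injI)
    fix x y :: 'a assume "(tr x, tr (w * x)) = (tr y, tr (w * y))"
    hence "tr (x + y) = 0" "tr (w * (x + y)) = 0" by (simp_all add: tr_add algebra_simps)
    hence h: "x + y \<in> FQ" "w * (x + y) \<in> FQ" by (simp_all add: tr_eq_0_iff)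
    have "x + y = 0"
    proof (rule ccontr)
      assume "x + y \<noteq> 0"
      hence "w \<in> FQ" using Fq_divide[OF h(2) h(1)] by simp
      thus False using w_notin_Fq by simp
    qed
    thus "x = y" by (simp add: add_eq_0_iff_eq)
  qed
  have "card (UNIV::'a set) \<le> card (FQ \<times> FQ)"
    by (rule card_inj_on_le[OF inj[THEN inj_on_subset, OF subset_UNIV]]) auto
  hence le1: "q ^ 2 \<le> ?c ^ 2" using card_UNIV_eq by (simp add: card_cartesian_product power2_eq_square)
  have "card (FQ \<times> FQ) \<le> card (UNIV::'a set)"
    by (rule card_inj_on_le[OF inj_on_Fq_basis[OF w_notin_Fq]]) auto
  hence le2: "?c ^ 2 \<le> q ^ 2" using card_UNIV_eq by (simp add: card_cartesian_product power2_eq_square)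
  from le1 le2 have "?c ^ 2 = q ^ 2" by simp
  thus ?thesis by (rule power2_eq_imp_eq) simp_all
qed

lemma Fq_basis_spans:
  assumes "lam \<notin> FQ"
  shows "\<exists>a b. a \<in> FQ \<and> b \<in> FQ \<and> x = a + b * lam"
proof -
  have "card ((\<lambda>(a, b). a + b * lam) ` (FQ \<times> FQ)) = card (UNIV::'a set)"
    using card_image[OF inj_on_Fq_basis[OF assms]] card_Fq card_UNIV_eq
    by (simp add: card_cartesian_product power2_eq_square)
  hence "(\<lambda>(a, b). a + b * lam) ` (FQ \<times> FQ) = UNIV"
    by (simp add: card_subset_eq)
  hence "x \<in> (\<lambda>(a, b). a + b * lam) ` (FQ \<times> FQ)" by simp
  thus ?thesis by auto
qed

section \<open>Vectors and planes of \<open>\<Sigma>\<close>\<close>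

definition pvec :: "'a \<Rightarrow> 'a \<Rightarrow> 'a \<Rightarrow> nat \<Rightarrow> 'a" where
  "pvec x d z = mk6 x (x ^ q) d (z ^ q) z 0"

lemma pvec_eq_0_iff: "pvec x d z = (\<lambda>_. 0) \<longleftrightarrow> x = 0 \<and> d = 0 \<and> z = 0"
  unfolding pvec_def mk6_eq_zero_iff using q_ge_2 by auto

lemma pvec_apply [simp]:
  "pvec x d z 1 = x" "pvec x d z (Suc 0) = x" "pvec x d z 2 = x ^ q" "pvec x d z 3 = d"
  "pvec x d z 4 = z ^ q" "pvec x d z 5 = z" "pvec x d z 6 = 0"
  by (simp_all add: pvec_def)

lemma N_eq_pvec: "mk6 0 0 1 0 0 0 = pvec 0 1 0"
  by (simp add: pvec_def)

lemma pvec_SigmaVecs: "d \<in> FQ \<Longrightarrow> pvec x d z \<in> SigmaVecs q"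
  unfolding SigmaVecs_def pvec_def
  by (rule CollectI, rule exI[of _ x], rule exI[of _ "z ^ q"], rule exI[of _ d], rule exI[of _ 0]) simp

lemma N_SigmaVecs: "mk6 0 0 1 0 0 (0::'a) \<in> SigmaVecs q"
  unfolding N_eq_pvec by (rule pvec_SigmaVecs) simp

lemma SigmaVecs_imp_pvec:
  assumes "v \<in> SigmaVecs q" "v 6 = 0"
  shows "\<exists>x d z. v = pvec x d z \<and> d \<in> FQ"
proof -
  from assms(1) obtain a b d0 d1 where v: "v = mk6 a (a ^ q) d0 b (b ^ q) d1" "d0 \<in> FQ"
    unfolding SigmaVecs_def by auto
  with assms(2) have "v = pvec a d0 (b ^ q)" by (simp add: pvec_def)
  thus ?thesis using v by blast
qed

lemma SigmaVecs_smult_imp_Fq: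
  assumes "y \<in> SigmaVecs q" "y \<noteq> (\<lambda>_. 0)" "(\<lambda>i. k * y i) \<in> SigmaVecs q"
  shows "k \<in> FQ"
proof -
  from assms(1) obtain a b d0 d1 where y: "y = mk6 a (a ^ q) d0 b (b ^ q) d1" "d0 \<in> FQ" "d1 \<in> FQ"
    unfolding SigmaVecs_def by auto
  from assms(3) obtain a' b' d0' d1' where
    "(\<lambda>i. k * y i) = mk6 a' (a' ^ q) d0' b' (b' ^ q) d1'" "d0' \<in> FQ" "d1' \<in> FQ"
    unfolding SigmaVecs_def by auto
  hence "(k * a) ^ q = k * a ^ q" "(k * b) ^ q = k * b ^ q" "(k * d0) ^ q = k * d0" "(k * d1) ^ q = k * d1"
    unfolding y(1) mk6_smult mk6_eq_iff by auto
  moreover have "a \<noteq> 0 \<or> d0 \<noteq> 0 \<or> b \<noteq> 0 \<or> d1 \<noteq> 0"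
    using assms(2) y(1) q_ge_2 by (auto simp: mk6_eq_zero_iff)
  ultimately show ?thesis
    using y(2,3) by (auto simp: mem_Fq power_mult_distrib)
qed

lemma frobenius_lin3:
  "a \<in> FQ \<Longrightarrow> b \<in> FQ \<Longrightarrow> c \<in> FQ \<Longrightarrow> (a*x + b*y + c*(z::'a)) ^ q = a * x^q + b * y^q + c * z^q"
  by (simp add: frobenius_add power_mult_distrib)

lemma lin3_SigmaVecs:
  assumes "u \<in> SigmaVecs q" "v \<in> SigmaVecs q" "x \<in> SigmaVecs q" "a \<in> FQ" "b \<in> FQ" "c \<in> FQ"
  shows "lin3 u v x a b c \<in> SigmaVecs q"
proof -
  from assms(1) obtain a1 b1 d1 e1 where u: "u = mk6 a1 (a1 ^ q) d1 b1 (b1 ^ q) e1" "d1 \<in> FQ" "e1 \<in> FQ"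
    unfolding SigmaVecs_def by auto
  from assms(2) obtain a2 b2 d2 e2 where v: "v = mk6 a2 (a2 ^ q) d2 b2 (b2 ^ q) e2" "d2 \<in> FQ" "e2 \<in> FQ"
    unfolding SigmaVecs_def by auto
  from assms(3) obtain a3 b3 d3 e3 where x: "x = mk6 a3 (a3 ^ q) d3 b3 (b3 ^ q) e3" "d3 \<in> FQ" "e3 \<in> FQ"
    unfolding SigmaVecs_def by auto
  show ?thesis unfolding u v x lin3_mk6 SigmaVecs_def
    apply (rule CollectI)
    apply (rule exI[of _ "a*a1+b*a2+c*a3"], rule exI[of _ "a*b1+b*b2+c*b3"])
    apply (rule exI[of _ "a*d1+b*d2+c*d3"], rule exI[of _ "a*e1+b*e2+c*e3"])
    using assms u v x by (simp add: frobenius_lin3)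
qed

lemma lin3_pvec:
  assumes "a \<in> FQ" "b \<in> FQ" "c \<in> FQ"
  shows "lin3 (pvec x1 d1 z1) (pvec x2 d2 z2) (pvec x3 d3 z3) a b c =
         pvec (a*x1+b*x2+c*x3) (a*d1+b*d2+c*d3) (a*z1+b*z2+c*z3)"
  unfolding pvec_def lin3_mk6 using assms by (simp add: frobenius_lin3)

lemma pvec_add:
  assumes "b \<in> FQ" "c \<in> FQ"
  shows "(\<lambda>i. b * pvec x1 d1 z1 i + c * pvec x2 d2 z2 i) = pvec (b*x1+c*x2) (b*d1+c*d2) (b*z1+c*z2)"
  unfolding pvec_def using assms by (simp add: mk6_def fun_eq_iff frobenius_add power_mult_distrib)

lemma hform_pvec: "hform q w (pvec x1 d1 z1) (pvec x2 d2 z2) = tr (w * (x1 * z2 + x2 * z1))"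
  unfolding hform_def tr_def by (simp add: frobenius_add power_mult_distrib algebra_simps)

lemma hform_smult: "hform q w (\<lambda>i. k * X i) (\<lambda>i. k' * Y i) = k * k' ^ q * hform q w X Y"
  unfolding hform_def by (simp add: power_mult_distrib algebra_simps)

lemma perp_N_imp_6: assumes "perp q w Npt (pt y)" shows "y 6 = 0"
proof -
  have "hform q w (mk6 0 0 1 0 0 0) y = 0" using assms pt_self unfolding perp_def Npt_def by blast
  hence "(y 6) ^ q = 0" by (simp add: hform_def)
  thus ?thesis by simp
qed

lemma quadric_pvec:
  "pvec x d z 3 ^ 2 + pvec x d z 1 * pvec x d z 5 + pvec x d z 2 * pvec x d z 4 = d ^ 2 + tr (x * z)"
  by (simp add: tr_def power_mult_distrib)

lemma lin3_inj:
  assumes "fq_indep q u v x" "a \<in> FQ" "b \<in> FQ" "c \<in> FQ" "a' \<in> FQ" "b' \<in> FQ" "c' \<in> FQ"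
    and "lin3 u v x a b c = lin3 u v x a' b' c'"
  shows "a = a' \<and> b = b' \<and> c = c'"
proof -
  have "lin3 u v x (a + a') (b + b') (c + c') = (\<lambda>i. lin3 u v x a b c i + lin3 u v x a' b' c' i)"
    by (simp add: lin3_def fun_eq_iff algebra_simps)
  also have "\<dots> = (\<lambda>_. 0)" using assms(8) by simp
  finally have "lin3 u v x (a + a') (b + b') (c + c') = (\<lambda>_. 0)" .
  moreover have "a + a' \<in> FQ" "b + b' \<in> FQ" "c + c' \<in> FQ" using assms(2-7) by simp_all
  ultimately have "a + a' = 0 \<and> b + b' = 0 \<and> c + c' = 0"
    using assms(1) unfolding fq_indep_def by blast
  thus ?thesis by (simp add: add_eq_0_iff_eq)
qed

lemma lin3_in_plane_span:
  "a \<in> FQ \<Longrightarrow> b \<in> FQ \<Longrightarrow> c \<in> FQ \<Longrightarrow> \<not> (a = 0 \<and> b = 0 \<and> c = 0) \<Longrightarrow>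
   pt (lin3 u v x a b c) \<in> plane_span q u v x"
  unfolding plane_span_def by blast

lemma pt_in_plane_span:
  fixes u v x :: "nat \<Rightarrow> 'a"
  shows "pt v \<in> plane_span q u v x" "pt x \<in> plane_span q u v x"
proof -
  have "lin3 u v x 0 1 0 = v" "lin3 u v x 0 0 1 = x" by (simp_all add: lin3_def)
  thus "pt v \<in> plane_span q u v x" "pt x \<in> plane_span q u v x"
    using lin3_in_plane_span[OF Fq_0 Fq_1 Fq_0, of u v x] lin3_in_plane_span[OF Fq_0 Fq_0 Fq_1, of u v x]
    by simp_all
qed

lemma plane_span_replace_first:
  assumes a: "a \<in> FQ" "a \<noteq> 0" and bc: "b \<in> FQ" "c \<in> FQ"
  shows "plane_span q (lin3 u v x a b c) v x = plane_span q u v x"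
proof (intro set_eqI iffI)
  fix P assume "P \<in> plane_span q (lin3 u v x a b c) v x"
  then obtain \<alpha> \<beta> \<gamma> where h: "P = pt (lin3 u v x (\<alpha> * a) (\<alpha> * b + \<beta>) (\<alpha> * c + \<gamma>))"
    "\<alpha> \<in> FQ" "\<beta> \<in> FQ" "\<gamma> \<in> FQ" "\<not> (\<alpha> = 0 \<and> \<beta> = 0 \<and> \<gamma> = 0)"
    unfolding plane_span_def lin3_lin3_first by blast
  moreover have "\<not> (\<alpha> * a = 0 \<and> \<alpha> * b + \<beta> = 0 \<and> \<alpha> * c + \<gamma> = 0)" using h(5) a by auto
  ultimately show "P \<in> plane_span q u v x" unfolding plane_span_def using a bc
    by (intro CollectI exI[of _ "\<alpha> * a"] exI[of _ "\<alpha> * b + \<beta>"] exI[of _ "\<alpha> * c + \<gamma>"]) simp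
next
  fix P assume "P \<in> plane_span q u v x"
  then obtain \<alpha> \<beta> \<gamma> where h: "P = pt (lin3 u v x \<alpha> \<beta> \<gamma>)"
    "\<alpha> \<in> FQ" "\<beta> \<in> FQ" "\<gamma> \<in> FQ" "\<not> (\<alpha> = 0 \<and> \<beta> = 0 \<and> \<gamma> = 0)"
    unfolding plane_span_def by blast
  define \<alpha>' where "\<alpha>' = \<alpha> / a"
  have "lin3 (lin3 u v x a b c) v x \<alpha>' (\<alpha>' * b + \<beta>) (\<alpha>' * c + \<gamma>) = lin3 u v x \<alpha> \<beta> \<gamma>"
    unfolding lin3_lin3_first \<alpha>'_def using a by (simp add: add.assoc[symmetric])
  moreover have "\<not> (\<alpha>' = 0 \<and> \<alpha>' * b + \<beta> = 0 \<and> \<alpha>' * c + \<gamma> = 0)" using h(5) a by (auto simp: \<alpha>'_def)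
  ultimately show "P \<in> plane_span q (lin3 u v x a b c) v x"
    unfolding plane_span_def using h a bc
    by (intro CollectI exI[of _ \<alpha>'] exI[of _ "\<alpha>' * b + \<beta>"] exI[of _ "\<alpha>' * c + \<gamma>"])
      (simp add: \<alpha>'_def)
qed

lemma fq_indep_replace_first:
  assumes "fq_indep q u v x" "a \<in> FQ" "a \<noteq> 0" "b \<in> FQ" "c \<in> FQ"
  shows "fq_indep q (lin3 u v x a b c) v x"
  unfolding fq_indep_def lin3_lin3_first
proof clarify
  fix \<alpha> \<beta> \<gamma> assume h: "\<alpha> \<in> FQ" "\<beta> \<in> FQ" "\<gamma> \<in> FQ"
    "lin3 u v x (\<alpha> * a) (\<alpha> * b + \<beta>) (\<alpha> * c + \<gamma>) = (\<lambda>_. 0)"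
  moreover have "\<alpha> * a \<in> FQ" "\<alpha> * b + \<beta> \<in> FQ" "\<alpha> * c + \<gamma> \<in> FQ" using h assms by simp_all
  ultimately have "\<alpha> * a = 0 \<and> \<alpha> * b + \<beta> = 0 \<and> \<alpha> * c + \<gamma> = 0"
    using assms(1) unfolding fq_indep_def by blast
  thus "\<alpha> = 0 \<and> \<beta> = 0 \<and> \<gamma> = 0" using assms(3) by auto
qed

lemma plane_span_exchange:
  assumes "fq_indep q u v x" "a \<in> FQ" "b \<in> FQ" "c \<in> FQ" "\<not> (a = 0 \<and> b = 0 \<and> c = 0)"
  shows "\<exists>v' x'. v' \<in> {u, v, x} \<and> x' \<in> {u, v, x} \<and>
           plane_span q u v x = plane_span q (lin3 u v x a b c) v' x' \<and>
           fq_indep q (lin3 u v x a b c) v' x'"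
proof -
  consider "a \<noteq> 0" | "b \<noteq> 0" | "c \<noteq> 0" using assms(5) by blast
  thus ?thesis
  proof cases
    case 1
    have "plane_span q u v x = plane_span q (lin3 u v x a b c) v x"
      using plane_span_replace_first[OF assms(2) 1 assms(3,4)] by simp
    moreover have "fq_indep q (lin3 u v x a b c) v x" by (rule fq_indep_replace_first[OF assms(1,2) 1 assms(3,4)])
    ultimately show ?thesis by blast
  next
    case 2
    have "plane_span q u v x = plane_span q (lin3 u v x a b c) u x"
      using plane_span_replace_first[OF assms(3) 2 assms(2,4), of v u x]
      by (simp add: plane_span_swap12[of q u v] lin3_swap12[of v u])
    moreover have "fq_indep q (lin3 u v x a b c) u x"
      using fq_indep_replace_first[OF _ assms(3) 2 assms(2,4), of v u x] assms(1)
      by (simp add: fq_indep_swap12[of q u v] lin3_swap12[of v u])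
    ultimately show ?thesis by blast
  next
    case 3
    have "plane_span q u v x = plane_span q (lin3 u v x a b c) v u"
      using plane_span_replace_first[OF assms(4) 3 assms(3,2), of x v u]
      by (simp add: plane_span_swap13[of q u v] lin3_swap13[of x v u])
    moreover have "fq_indep q (lin3 u v x a b c) v u"
      using fq_indep_replace_first[OF _ assms(4) 3 assms(3,2), of x v u] assms(1)
      by (simp add: fq_indep_swap13[of q u v] lin3_swap13[of x v u])
    ultimately show ?thesis by blast
  qed
qed

lemma SigmaVecs_in_plane_span:
  assumes "u \<in> SigmaVecs q" "v \<in> SigmaVecs q" "x \<in> SigmaVecs q" "fq_indep q u v x"
    and "y \<in> SigmaVecs q" "pt y = pt (lin3 u v x a b c)"
    and "a \<in> FQ" "b \<in> FQ" "c \<in> FQ" "\<not> (a = 0 \<and> b = 0 \<and> c = 0)"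
  shows "\<exists>k. k \<in> FQ \<and> k \<noteq> 0 \<and> y = lin3 u v x (k * a) (k * b) (k * c)"
proof -
  obtain k where k: "k \<noteq> 0" "y = (\<lambda>i. k * lin3 u v x a b c i)"
    using pt_eq_imp_smult[OF assms(6)] by blast
  have "lin3 u v x a b c \<noteq> (\<lambda>_. 0)" using assms(4,7-10) unfolding fq_indep_def by blast
  hence "k \<in> FQ"
    by (rule SigmaVecs_smult_imp_Fq[OF lin3_SigmaVecs[OF assms(1-3,7-9)]]) (simp only: k(2)[symmetric] assms(5))
  moreover have "y = lin3 u v x (k * a) (k * b) (k * c)"
    using k(2) by (simp add: lin3_def fun_eq_iff algebra_simps)
  ultimately show ?thesis using k(1) by blast
qed

section \<open>Planes of \<open>W(5,q)\<close> through \<open>N\<close>\<close>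

text \<open>Points of \<open>\<Pi>\<close> over a fixed \<open>d\<close> are parametrised by pairs \<open>(x, z)\<close>. In characteristic 2,
  \<open>det2\<close> is the determinant.\<close>

definition smul2 :: "'a \<Rightarrow> 'a \<times> 'a \<Rightarrow> 'a \<times> 'a" where
  "smul2 c p = (c * fst p, c * snd p)"

definition add2 :: "'a \<times> 'a \<Rightarrow> 'a \<times> 'a \<Rightarrow> 'a \<times> 'a" where
  "add2 p p' = (fst p + fst p', snd p + snd p')"

definition det2 :: "'a \<times> 'a \<Rightarrow> 'a \<times> 'a \<Rightarrow> 'a" where
  "det2 u v = fst u * snd v + fst v * snd u"

definition span2 :: "'a \<times> 'a \<Rightarrow> 'a \<times> 'a \<Rightarrow> ('a \<times> 'a) set" where
  "span2 u v = {add2 (smul2 a u) (smul2 b v) | a b. a \<in> FQ \<and> b \<in> FQ}"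

definition indep2 :: "'a \<times> 'a \<Rightarrow> 'a \<times> 'a \<Rightarrow> bool" where
  "indep2 u v \<longleftrightarrow>
     (\<forall>a b. a \<in> FQ \<and> b \<in> FQ \<and> add2 (smul2 a u) (smul2 b v) = (0,0) \<longrightarrow> a = 0 \<and> b = 0)"

lemma smul2_1 [simp]: "smul2 1 p = p"
  by (simp add: smul2_def)

lemma smul2_smul2: "smul2 a (smul2 b p) = smul2 (a * b) p"
  by (simp add: smul2_def mult.assoc)

lemma smul2_eq_0_iff: "p \<noteq> (0,0) \<Longrightarrow> smul2 l p = (0,0) \<longleftrightarrow> l = 0"
  by (cases p) (auto simp: smul2_def)

lemma add2_commute: "add2 x y = add2 y x"
  by (simp add: add2_def add.commute)

lemma det2_comb:
  "det2 (add2 (smul2 a u) (smul2 b v)) (add2 (smul2 a' u) (smul2 b' v)) = (a * b' + a' * b) * det2 u v"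
proof -
  obtain u1 u2 v1 v2 where uv: "u = (u1, u2)" "v = (v1, v2)" by (cases u, cases v) auto
  let ?t = "a * a' * u1 * u2 + b * b' * v1 * v2"
  have "det2 (add2 (smul2 a u) (smul2 b v)) (add2 (smul2 a' u) (smul2 b' v)) =
        (a * b' + a' * b) * det2 u v + (?t + ?t)"
    unfolding uv det2_def add2_def smul2_def by (simp only: fst_conv snd_conv) algebra
  thus ?thesis by simp
qed

lemma det2_smul2_right: "det2 u (smul2 k v) = k * det2 u v"
  by (simp add: det2_def smul2_def algebra_simps)

lemma det2_smul2_self: "det2 u (smul2 k u) = 0"
  by (simp add: det2_def smul2_def algebra_simps mult_2[symmetric] two_eq_zero)

lemma det2_eq_1:
  assumes "u \<noteq> (0,0)" shows "\<exists>v. det2 u v = 1"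
proof (cases "fst u = 0")
  case True
  hence "det2 u (inverse (snd u), 0) = 1" using assms by (cases u) (simp add: det2_def)
  thus ?thesis by blast
next
  case False
  hence "det2 u (0, inverse (fst u)) = 1" by (simp add: det2_def)
  thus ?thesis by blast
qed

lemma span2_0 [simp]: "(0,0) \<in> span2 u v"
  unfolding span2_def by (rule CollectI, rule exI[of _ 0], rule exI[of _ 0]) (simp add: smul2_def add2_def)

lemma span2_comb: "a \<in> FQ \<Longrightarrow> b \<in> FQ \<Longrightarrow> add2 (smul2 a u) (smul2 b v) \<in> span2 u v"
  unfolding span2_def by blast

lemma span2_smul2: "p \<in> span2 u v \<Longrightarrow> k \<in> FQ \<Longrightarrow> smul2 k p \<in> span2 u v"
  unfolding span2_def
proof clarsimp
  fix a b assume "a \<in> FQ" "b \<in> FQ" "k \<in> FQ"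
  thus "\<exists>a' b'. smul2 k (add2 (smul2 a u) (smul2 b v)) = add2 (smul2 a' u) (smul2 b' v) \<and> a' \<in> FQ \<and> b' \<in> FQ"
    by (intro exI[of _ "k*a"] exI[of _ "k*b"]) (simp add: smul2_def add2_def algebra_simps)
qed

lemma span2_left: "u \<in> span2 u v"
  using span2_comb[OF Fq_1 Fq_0, of u v] by (cases u, cases v) (simp add: smul2_def add2_def)

lemma span2_right: "v \<in> span2 u v"
  using span2_comb[OF Fq_0 Fq_1, of u v] by (cases u, cases v) (simp add: smul2_def add2_def)

lemma span2_subset:
  assumes "x \<in> span2 u v" "y \<in> span2 u v"
  shows "span2 x y \<subseteq> span2 u v"
proof
  fix p assume "p \<in> span2 x y"
  then obtain s t where p: "p = add2 (smul2 s x) (smul2 t y)" "s \<in> FQ" "t \<in> FQ" unfolding span2_def by blast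
  from assms(1) obtain a1 b1 where x: "x = add2 (smul2 a1 u) (smul2 b1 v)" "a1 \<in> FQ" "b1 \<in> FQ"
    unfolding span2_def by blast
  from assms(2) obtain a2 b2 where y: "y = add2 (smul2 a2 u) (smul2 b2 v)" "a2 \<in> FQ" "b2 \<in> FQ"
    unfolding span2_def by blast
  have "p = add2 (smul2 (s*a1 + t*a2) u) (smul2 (s*b1 + t*b2) v)" unfolding p(1) x(1) y(1)
    by (simp add: add2_def smul2_def algebra_simps)
  thus "p \<in> span2 u v" using span2_comb p x y by simp
qed

lemma span2_smul2_right:
  assumes "k \<in> FQ" "k \<noteq> 0"
  shows "span2 u (smul2 k v) = span2 u v"
proof
  show "span2 u (smul2 k v) \<subseteq> span2 u v"
    by (rule span2_subset[OF span2_left span2_smul2[OF span2_right assms(1)]])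
  have "smul2 (inverse k) (smul2 k v) \<in> span2 u (smul2 k v)"
    by (rule span2_smul2[OF span2_right]) (simp add: assms(1))
  moreover have "smul2 (inverse k) (smul2 k v) = v"
    using assms(2) by (cases v) (simp add: smul2_def field_simps)
  ultimately have "v \<in> span2 u (smul2 k v)" by simp
  thus "span2 u v \<subseteq> span2 u (smul2 k v)" by (rule span2_subset[OF span2_left])
qed

lemma indep2_comb_eq_0_iff:
  "indep2 u v \<Longrightarrow> a \<in> FQ \<Longrightarrow> b \<in> FQ \<Longrightarrow> add2 (smul2 a u) (smul2 b v) = (0,0) \<longleftrightarrow> a = 0 \<and> b = 0"
proof
  assume "indep2 u v" "a \<in> FQ" "b \<in> FQ" "add2 (smul2 a u) (smul2 b v) = (0,0)"
  thus "a = 0 \<and> b = 0" unfolding indep2_def by blast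
qed (simp add: smul2_def add2_def)

lemma indep2_comb_inj:
  assumes "indep2 u v" "a \<in> FQ" "b \<in> FQ" "a' \<in> FQ" "b' \<in> FQ"
    and "add2 (smul2 a u) (smul2 b v) = add2 (smul2 a' u) (smul2 b' v)"
  shows "a = a' \<and> b = b'"
proof -
  have "add2 (smul2 (a + a') u) (smul2 (b + b') v) =
        (fst (add2 (smul2 a u) (smul2 b v)) + fst (add2 (smul2 a' u) (smul2 b' v)),
         snd (add2 (smul2 a u) (smul2 b v)) + snd (add2 (smul2 a' u) (smul2 b' v)))"
    by (simp add: add2_def smul2_def algebra_simps)
  also have "\<dots> = (0,0)" unfolding assms(6) by simp
  finally show ?thesis
    using indep2_comb_eq_0_iff[OF assms(1), of "a + a'" "b + b'"] assms(2-5) by (simp add: add_eq_0_iff_eq)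
qed

lemma indep2_sym: "indep2 u v \<Longrightarrow> indep2 v u"
  unfolding indep2_def by (metis add2_commute)

lemma indep2_left_nonzero: "indep2 u v \<Longrightarrow> u \<noteq> (0,0)"
  using indep2_comb_eq_0_iff[of u v 1 0] by (auto simp: smul2_def add2_def)

lemma indep2_right_nonzero: "indep2 u v \<Longrightarrow> v \<noteq> (0,0)"
  using indep2_left_nonzero[OF indep2_sym] .

lemma indep2_if_det2_nonzero:
  assumes "det2 u v \<noteq> 0" shows "indep2 u v"
  unfolding indep2_def
proof (intro allI impI)
  fix a b assume h: "a \<in> FQ \<and> b \<in> FQ \<and> add2 (smul2 a u) (smul2 b v) = (0,0)"
  have z: "\<And>p. det2 (0,0) p = 0" by (simp add: det2_def)
  have "b * det2 u v = 0" using det2_comb[of a u b v 1 0] h z by simp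
  moreover have "a * det2 u v = 0" using det2_comb[of a u b v 0 1] h z by simp
  ultimately show "a = 0 \<and> b = 0" using assms by simp
qed

definition vec :: "'a \<Rightarrow> 'a \<times> 'a \<Rightarrow> nat \<Rightarrow> 'a" where
  "vec x p = pvec (fst p) x (snd p)"

definition plane :: "('a \<times> 'a) set \<Rightarrow> (nat \<Rightarrow> 'a) set set" where
  "plane W = {pt (vec x p) | x p. x \<in> FQ \<and> p \<in> W \<and> \<not> (x = 0 \<and> p = (0,0))}"

lemma vec_SigmaVecs: "x \<in> FQ \<Longrightarrow> vec x p \<in> SigmaVecs q"
  by (simp add: vec_def pvec_SigmaVecs)

lemma vec_eq_0_iff: "vec x p = (\<lambda>_. 0) \<longleftrightarrow> x = 0 \<and> p = (0,0)"
  by (cases p) (auto simp: vec_def pvec_eq_0_iff)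

lemma N_eq_vec: "mk6 0 0 1 0 0 0 = vec 1 (0, 0)"
  by (simp add: vec_def N_eq_pvec)

lemma lin3_N_vec:
  assumes "a \<in> FQ" "b \<in> FQ" "c \<in> FQ"
  shows "lin3 (mk6 0 0 1 0 0 0) (vec 0 u) (vec 0 v) a b c = vec a (add2 (smul2 b u) (smul2 c v))"
  unfolding N_eq_pvec vec_def using assms by (simp add: lin3_pvec smul2_def add2_def)

lemma hform_vec: "hform q w (vec x p) (vec x' p') = tr (w * det2 p p')"
  unfolding vec_def det2_def by (simp add: hform_pvec)

lemma vec_in_plane: "x \<in> FQ \<Longrightarrow> p \<in> W \<Longrightarrow> \<not> (x = 0 \<and> p = (0,0)) \<Longrightarrow> pt (vec x p) \<in> plane W"
  unfolding plane_def by blast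

text \<open>A scalar relating two vectors of \<open>\<Sigma>\<close> lies in \<open>F_q\<close>.\<close>

lemma vec_in_plane_imp_span2:
  assumes "x \<in> FQ" "p \<noteq> (0,0)" "pt (vec x p) \<in> plane (span2 u v)"
  shows "p \<in> span2 u v"
proof -
  from assms(3) obtain x' p' where h: "pt (vec x p) = pt (vec x' p')" "x' \<in> FQ" "p' \<in> span2 u v"
    "\<not> (x' = 0 \<and> p' = (0,0))" unfolding plane_def by blast
  from pt_eq_imp_smult[OF h(1)] obtain k where k: "vec x p = (\<lambda>i. k * vec x' p' i)" by blast
  have "vec x' p' \<noteq> (\<lambda>_. 0)" using h(4) by (simp add: vec_eq_0_iff)
  hence "k \<in> FQ"
    by (rule SigmaVecs_smult_imp_Fq[OF vec_SigmaVecs[OF h(2)]]) (simp only: k[symmetric] vec_SigmaVecs assms(1))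
  moreover have "p = smul2 k p'"
    using fun_cong[OF k, of 1] fun_cong[OF k, of 5] by (simp add: vec_def smul2_def prod_eq_iff)
  ultimately show ?thesis using span2_smul2[OF h(3)] by simp
qed

lemma plane_eq_iff: "plane (span2 u v) = plane (span2 u' v') \<longleftrightarrow> span2 u v = span2 u' v'"
proof
  have sub: "span2 u v \<subseteq> span2 u' v'" if "plane (span2 u v) \<subseteq> plane (span2 u' v')" for u v u' v'
  proof
    fix p assume p: "p \<in> span2 u v"
    show "p \<in> span2 u' v'"
    proof (cases "p = (0,0)")
      case False
      have "pt (vec 0 p) \<in> plane (span2 u v)" by (rule vec_in_plane) (use p False in simp_all)
      thus ?thesis using that vec_in_plane_imp_span2[OF Fq_0 False] by blast
    qed simp
  qed
  assume "plane (span2 u v) = plane (span2 u' v')"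
  thus "span2 u v = span2 u' v'" using sub by blast
qed simp

lemma plane_span_N_vec:
  assumes "indep2 u v"
  shows "plane_span q (mk6 0 0 1 0 0 0) (vec 0 u) (vec 0 v) = plane (span2 u v)"
  unfolding plane_span_def plane_def
proof (intro set_eqI iffI)
  fix P assume "P \<in> {pt (lin3 (mk6 0 0 1 0 0 0) (vec 0 u) (vec 0 v) a b c) |a b c.
      a \<in> FQ \<and> b \<in> FQ \<and> c \<in> FQ \<and> \<not> (a = 0 \<and> b = 0 \<and> c = 0)}"
  then obtain a b c where h: "P = pt (vec a (add2 (smul2 b u) (smul2 c v)))"
    "a \<in> FQ" "b \<in> FQ" "c \<in> FQ" "\<not> (a = 0 \<and> b = 0 \<and> c = 0)"
    by (auto simp: lin3_N_vec)
  thus "P \<in> {pt (vec x p) |x p. x \<in> FQ \<and> p \<in> span2 u v \<and> \<not> (x = 0 \<and> p = (0, 0))}"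
    using indep2_comb_eq_0_iff[OF assms] span2_comb by blast
next
  fix P assume "P \<in> {pt (vec x p) |x p. x \<in> FQ \<and> p \<in> span2 u v \<and> \<not> (x = 0 \<and> p = (0, 0))}"
  then obtain x b c where h: "P = pt (vec x (add2 (smul2 b u) (smul2 c v)))" "x \<in> FQ" "b \<in> FQ" "c \<in> FQ"
    "\<not> (x = 0 \<and> add2 (smul2 b u) (smul2 c v) = (0, 0))" unfolding span2_def by blast
  hence "P = pt (lin3 (mk6 0 0 1 0 0 0) (vec 0 u) (vec 0 v) x b c)" by (simp add: lin3_N_vec)
  moreover have "\<not> (x = 0 \<and> b = 0 \<and> c = 0)" using h(5) by (auto simp: smul2_def add2_def)
  ultimately show "P \<in> {pt (lin3 (mk6 0 0 1 0 0 0) (vec 0 u) (vec 0 v) a b c) |a b c.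
      a \<in> FQ \<and> b \<in> FQ \<and> c \<in> FQ \<and> \<not> (a = 0 \<and> b = 0 \<and> c = 0)}" using h by blast
qed

lemma fq_indep_N_vec_iff:
  "fq_indep q (mk6 0 0 1 0 0 0) (vec 0 u) (vec 0 v) \<longleftrightarrow> indep2 u v"
proof
  assume h: "fq_indep q (mk6 0 0 1 0 0 0) (vec 0 u) (vec 0 v)"
  show "indep2 u v" unfolding indep2_def
  proof clarify
    fix b c assume bc: "b \<in> FQ" "c \<in> FQ" "add2 (smul2 b u) (smul2 c v) = (0,0)"
    hence "lin3 (mk6 0 0 1 0 0 0) (vec 0 u) (vec 0 v) 0 b c = (\<lambda>_. 0)"
      by (simp add: lin3_N_vec vec_eq_0_iff)
    thus "b = 0 \<and> c = 0" using h[unfolded fq_indep_def, rule_format, of 0 b c] bc by simp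
  qed
next
  assume ind: "indep2 u v"
  show "fq_indep q (mk6 0 0 1 0 0 0) (vec 0 u) (vec 0 v)"
    unfolding fq_indep_def
  proof clarify
    fix a b c assume h: "a \<in> FQ" "b \<in> FQ" "c \<in> FQ"
      "lin3 (mk6 0 0 1 0 0 0) (vec 0 u) (vec 0 v) a b c = (\<lambda>_. 0)"
    hence "a = 0 \<and> add2 (smul2 b u) (smul2 c v) = (0,0)" by (simp add: lin3_N_vec vec_eq_0_iff)
    thus "a = 0 \<and> b = 0 \<and> c = 0" using indep2_comb_eq_0_iff[OF ind h(2,3)] by simp
  qed
qed

definition ti_pair :: "'a \<times> 'a \<Rightarrow> 'a \<times> 'a \<Rightarrow> bool" where
  "ti_pair u v \<longleftrightarrow> indep2 u v \<and> tr (w * det2 u v) = 0"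

lemma plane_in_WPlanesN:
  assumes "ti_pair u v"
  shows "plane (span2 u v) \<in> WPlanesN q w"
proof -
  have ind: "indep2 u v" and t: "tr (w * det2 u v) = 0" using assms by (auto simp: ti_pair_def)
  have "plane (span2 u v) \<in> SigmaPlanes q"
    unfolding SigmaPlanes_def
    using plane_span_N_vec[OF ind] fq_indep_N_vec_iff[of u v] ind N_SigmaVecs vec_SigmaVecs[OF Fq_0]
    by blast
  moreover have "perp q w P R" if PR: "P \<in> plane (span2 u v)" "R \<in> plane (span2 u v)" for P R
  proof -
    obtain x a b where P: "P = pt (vec x (add2 (smul2 a u) (smul2 b v)))" "a \<in> FQ" "b \<in> FQ"
      using PR(1) unfolding plane_def span2_def by blast
    obtain x' a' b' where R: "R = pt (vec x' (add2 (smul2 a' u) (smul2 b' v)))" "a' \<in> FQ" "b' \<in> FQ"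
      using PR(2) unfolding plane_def span2_def by blast
    have "hform q w (vec x (add2 (smul2 a u) (smul2 b v))) (vec x' (add2 (smul2 a' u) (smul2 b' v)))
        = tr ((a * b' + a' * b) * (w * det2 u v))"
      unfolding hform_vec det2_comb by (simp add: algebra_simps)
    also have "\<dots> = (a * b' + a' * b) * tr (w * det2 u v)" using P R by (simp add: tr_smult)
    finally have "hform q w (vec x (add2 (smul2 a u) (smul2 b v))) (vec x' (add2 (smul2 a' u) (smul2 b' v)))
        = 0" using t by simp
    thus ?thesis unfolding perp_def P(1) R(1) by (auto simp: pt_mem hform_smult)
  qed
  moreover have "Npt \<in> plane (span2 u v)"
    unfolding Npt_def N_eq_vec by (rule vec_in_plane) simp_all
  ultimately show ?thesis unfolding WPlanesN_def by blast
qed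

lemma WPlanesN_imp_plane_span_N:
  assumes "pi \<in> WPlanesN q w"
  shows "\<exists>v x. v \<in> SigmaVecs q \<and> x \<in> SigmaVecs q \<and> v 6 = 0 \<and> x 6 = 0 \<and>
           fq_indep q (mk6 0 0 1 0 0 0) v x \<and> pi = plane_span q (mk6 0 0 1 0 0 0) v x"
proof -
  from assms have ti: "\<forall>P\<in>pi. \<forall>R\<in>pi. perp q w P R" and "Npt \<in> pi" "pi \<in> SigmaPlanes q"
    unfolding WPlanesN_def by auto
  then obtain u v x a b c where uvx: "pi = plane_span q u v x" "u \<in> SigmaVecs q" "v \<in> SigmaVecs q"
    "x \<in> SigmaVecs q" "fq_indep q u v x" and abc: "Npt = pt (lin3 u v x a b c)"
    "a \<in> FQ" "b \<in> FQ" "c \<in> FQ" "\<not> (a = 0 \<and> b = 0 \<and> c = 0)"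
    unfolding SigmaPlanes_def plane_span_def by blast
  obtain k where k: "k \<in> FQ" "k \<noteq> 0" "mk6 0 0 1 0 0 0 = lin3 u v x (k * a) (k * b) (k * c)"
    using SigmaVecs_in_plane_span[OF uvx(2-5) N_SigmaVecs abc(1)[unfolded Npt_def] abc(2-5)] by blast
  obtain v' x' where vx: "v' \<in> {u, v, x}" "x' \<in> {u, v, x}"
    "pi = plane_span q (mk6 0 0 1 0 0 0) v' x'" "fq_indep q (mk6 0 0 1 0 0 0) v' x'"
    using plane_span_exchange[OF uvx(5), of "k * a" "k * b" "k * c"] abc(2-5) k uvx(1) by auto
  have "pt v' \<in> pi" "pt x' \<in> pi" unfolding vx(3) by (rule pt_in_plane_span)+
  hence "v' 6 = 0" "x' 6 = 0" using ti \<open>Npt \<in> pi\<close> perp_N_imp_6 by blast+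
  moreover have "v' \<in> SigmaVecs q" "x' \<in> SigmaVecs q" using vx(1,2) uvx(2-4) by auto
  ultimately show ?thesis using vx(3,4) by blast
qed

lemma plane_span_N_pvec_reduce:
  assumes "d \<in> FQ"
  shows "plane_span q (mk6 0 0 1 0 0 0) (pvec x d z) y = plane_span q (mk6 0 0 1 0 0 0) (vec 0 (x, z)) y"
    and "fq_indep q (mk6 0 0 1 0 0 0) (pvec x d z) y \<Longrightarrow>
         fq_indep q (mk6 0 0 1 0 0 0) (vec 0 (x, z)) y"
proof -
  have e: "vec 0 (x, z) = lin3 (pvec x d z) (mk6 0 0 1 0 0 0) y 1 d 0"
    by (simp add: lin3_def vec_def pvec_def mk6_def fun_eq_iff)
  show "plane_span q (mk6 0 0 1 0 0 0) (pvec x d z) y = plane_span q (mk6 0 0 1 0 0 0) (vec 0 (x, z)) y"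
    unfolding plane_span_swap12[of q "mk6 0 0 1 0 0 0"] e
    by (rule plane_span_replace_first[symmetric]) (simp_all add: assms)
  assume "fq_indep q (mk6 0 0 1 0 0 0) (pvec x d z) y"
  thus "fq_indep q (mk6 0 0 1 0 0 0) (vec 0 (x, z)) y"
    unfolding fq_indep_swap12[of q "mk6 0 0 1 0 0 0"] e
    by (rule fq_indep_replace_first) (simp_all add: assms)
qed

lemma WPlanesN_imp_plane:
  assumes "pi \<in> WPlanesN q w"
  shows "\<exists>u v. ti_pair u v \<and> pi = plane (span2 u v)"
proof -
  let ?N = "mk6 0 0 1 0 0 0 :: nat \<Rightarrow> 'a"
  obtain v x where vx: "v \<in> SigmaVecs q" "x \<in> SigmaVecs q" "v 6 = 0" "x 6 = 0"
    "fq_indep q ?N v x" "pi = plane_span q ?N v x"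
    using WPlanesN_imp_plane_span_N[OF assms] by blast
  obtain x2 d2 z2 x3 d3 z3 where v: "v = pvec x2 d2 z2" "d2 \<in> FQ" and x: "x = pvec x3 d3 z3" "d3 \<in> FQ"
    using SigmaVecs_imp_pvec[OF vx(1,3)] SigmaVecs_imp_pvec[OF vx(2,4)] by blast
  let ?u1 = "(x2, z2)" and ?u2 = "(x3, z3)"
  have "pi = plane_span q ?N (vec 0 ?u1) (vec 0 ?u2)" "fq_indep q ?N (vec 0 ?u1) (vec 0 ?u2)"
    using vx(5,6) plane_span_N_pvec_reduce[OF v(2)] plane_span_N_pvec_reduce[OF x(2)]
    unfolding v(1) x(1) by (simp_all add: plane_span_swap23[of q ?N] fq_indep_swap23[of q ?N])
  hence ind: "indep2 ?u1 ?u2" and pi: "pi = plane (span2 ?u1 ?u2)"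
    using fq_indep_N_vec_iff plane_span_N_vec by auto
  have "pt (vec 0 ?u1) \<in> pi" "pt (vec 0 ?u2) \<in> pi"
    unfolding pi using vec_in_plane[OF Fq_0] span2_left span2_right
      indep2_left_nonzero[OF ind] indep2_right_nonzero[OF ind] by blast+
  hence "hform q w (vec 0 ?u1) (vec 0 ?u2) = 0"
    using assms pt_self unfolding WPlanesN_def perp_def by blast
  thus ?thesis using ind pi by (auto simp: ti_pair_def hform_vec)
qed

lemma WPlanesN_eq: "WPlanesN q w = {plane (span2 u v) | u v. ti_pair u v}"
  using WPlanesN_imp_plane plane_in_WPlanesN by blast

section \<open>Intersections with the quadric\<close>

lemma quadric_smult:
  "(c * a) ^ 2 + (c * b) * (c * d) + (c * e) * (c * f) = (c::'a) ^ 2 * (a ^ 2 + b * d + e * f)"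
  by algebra

lemma vec_in_Qpts_iff:
  assumes "x \<in> FQ" and "\<not> (x = 0 \<and> p = (0,0))"
  shows "pt (vec x p) \<in> Qpts q \<longleftrightarrow> x ^ 2 = tr (fst p * snd p)"
proof -
  have S: "pt (vec x p) \<in> SigmaPts q"
    unfolding SigmaPts_def using vec_SigmaVecs[OF assms(1), of p] assms(2) by (auto simp: vec_eq_0_iff)
  have quad: "vec x p 3 ^ 2 + vec x p 1 * vec x p 5 + vec x p 2 * vec x p 4 = x ^ 2 + tr (fst p * snd p)"
    unfolding vec_def by (rule quadric_pvec)
  have "(\<forall>y\<in>pt (vec x p). y 6 = 0 \<and> y 3 ^ 2 + y 1 * y 5 + y 2 * y 4 = 0) \<longleftrightarrow>
        x ^ 2 + tr (fst p * snd p) = 0"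
  proof
    assume "\<forall>y\<in>pt (vec x p). y 6 = 0 \<and> y 3 ^ 2 + y 1 * y 5 + y 2 * y 4 = 0"
    thus "x ^ 2 + tr (fst p * snd p) = 0" using pt_self quad by metis
  next
    assume h: "x ^ 2 + tr (fst p * snd p) = 0"
    show "\<forall>y\<in>pt (vec x p). y 6 = 0 \<and> y 3 ^ 2 + y 1 * y 5 + y 2 * y 4 = 0"
    proof
      fix y assume "y \<in> pt (vec x p)"
      then obtain c where y: "y = (\<lambda>i. c * vec x p i)" unfolding pt_mem by blast
      have "y 3 ^ 2 + y 1 * y 5 + y 2 * y 4 =
            c ^ 2 * (vec x p 3 ^ 2 + vec x p 1 * vec x p 5 + vec x p 2 * vec x p 4)"
        unfolding y by (rule quadric_smult)
      thus "y 6 = 0 \<and> y 3 ^ 2 + y 1 * y 5 + y 2 * y 4 = 0" unfolding quad h y by (simp add: vec_def)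
    qed
  qed
  thus ?thesis using S unfolding Qpts_def by (simp add: add_eq_0_iff_eq)
qed

lemma plane_inter_Qpts:
  "plane W \<inter> Qpts q =
   {pt (vec x p) | x p. x \<in> FQ \<and> p \<in> W \<and> \<not> (x = 0 \<and> p = (0,0)) \<and> x ^ 2 = tr (fst p * snd p)}"
  unfolding plane_def using vec_in_Qpts_iff by blast

text \<open>Over each nonzero pair there is exactly one point of \<open>Q\<close>.\<close>

definition qvec :: "'a \<times> 'a \<Rightarrow> nat \<Rightarrow> 'a" where
  "qvec p = vec (sqroot (tr (fst p * snd p))) p"

lemma qvec_SigmaVecs: "qvec p \<in> SigmaVecs q"
  unfolding qvec_def by (rule vec_SigmaVecs) simp

lemma qvec_eq_0_iff: "qvec p = (\<lambda>_. 0) \<longleftrightarrow> p = (0,0)"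
  unfolding qvec_def vec_eq_0_iff by (cases p) auto

lemma plane_inter_Qpts_qvec: "plane W \<inter> Qpts q = {pt (qvec p) | p. p \<in> W \<and> p \<noteq> (0,0)}"
  unfolding plane_inter_Qpts
proof (intro set_eqI iffI)
  fix P assume "P \<in> {pt (vec x p) | x p. x \<in> FQ \<and> p \<in> W \<and> \<not> (x = 0 \<and> p = (0,0)) \<and>
    x ^ 2 = tr (fst p * snd p)}"
  then obtain x p where h: "P = pt (vec x p)" "p \<in> W" "\<not> (x = 0 \<and> p = (0,0))" "x ^ 2 = tr (fst p * snd p)"
    by blast
  moreover have "x = sqroot (tr (fst p * snd p))" using sqroot_unique[OF h(4)] .
  moreover have "p \<noteq> (0,0)" using h(3,4) by auto
  ultimately show "P \<in> {pt (qvec p) | p. p \<in> W \<and> p \<noteq> (0,0)}" unfolding qvec_def by blast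
next
  fix P assume "P \<in> {pt (qvec p) | p. p \<in> W \<and> p \<noteq> (0,0)}"
  then obtain p where h: "P = pt (qvec p)" "p \<in> W" "p \<noteq> (0,0)" by blast
  show "P \<in> {pt (vec x p) | x p. x \<in> FQ \<and> p \<in> W \<and> \<not> (x = 0 \<and> p = (0,0)) \<and>
    x ^ 2 = tr (fst p * snd p)}"
    unfolding h(1) qvec_def
    by (intro CollectI exI[of _ "sqroot (tr (fst p * snd p))"] exI[of _ p]) (simp add: h(2,3))
qed

definition line2 :: "'a \<times> 'a \<Rightarrow> ('a \<times> 'a) set" where
  "line2 x = range (\<lambda>l. smul2 l x)"

text \<open>\<open>spread_dir t\<close> spans the \<open>F_{q^2}\<close>-line of pairs of \<open>S_t\<close>, with \<open>None\<close> standing for \<open>S_\<infinity>\<close>.\<close>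

definition spread_dir :: "'a option \<Rightarrow> 'a \<times> 'a" where
  "spread_dir t = (case t of None \<Rightarrow> (0, 1) | Some t \<Rightarrow> (1, t ^ 2))"

definition spread_line :: "'a option \<Rightarrow> (nat \<Rightarrow> 'a) set set" where
  "spread_line t = (case t of None \<Rightarrow> Sline_inf q | Some t \<Rightarrow> Sline q t)"

lemma spread_dir_nonzero: "spread_dir t \<noteq> (0,0)"
  by (cases t) (auto simp: spread_dir_def)

lemma spread_line_eq: "spread_line t = {pt (qvec (smul2 l (spread_dir t))) | l. l \<noteq> 0}"
proof (cases t)
  case None
  have "mk6 0 0 0 (l ^ q) l 0 = qvec (smul2 l (0, 1))" for l
    unfolding qvec_def vec_def pvec_def smul2_def by simp
  thus ?thesis using None unfolding spread_line_def spread_dir_def Sline_inf_def by simp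
next
  case (Some s)
  have "mk6 l (l ^ q) (l * s + l ^ q * s ^ q) (l ^ q * s ^ (2 * q)) (l * s ^ 2) 0 = qvec (smul2 l (1, s ^ 2))"
    for l
  proof -
    have "sqroot (tr (l * (l * s ^ 2))) = tr (l * s)"
      using sqroot_tr_square[of "l * s"] by (simp add: power2_eq_square algebra_simps)
    moreover have "(s ^ 2) ^ q = s ^ (2 * q)" by (simp add: power_mult)
    ultimately show ?thesis
      unfolding qvec_def vec_def pvec_def smul2_def by (simp add: tr_def power_mult_distrib)
  qed
  thus ?thesis using Some unfolding spread_line_def spread_dir_def Sline_def by simp
qed

lemma Spread_eq_range: "Spread q = range spread_line"
  unfolding Spread_def spread_line_def by (auto split: option.splits)

lemma spread_dir_smul2_imp_eq:
  assumes "spread_dir t' = smul2 l (spread_dir t)"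
  shows "t' = t"
proof (cases t; cases t')
  fix s s' assume "t = Some s" "t' = Some s'"
  hence "s' ^ 2 = s ^ 2" using assms by (simp add: spread_dir_def smul2_def)
  thus "t' = t" using \<open>t = Some s\<close> \<open>t' = Some s'\<close> square_inj by simp
qed (use assms in \<open>auto simp: spread_dir_def smul2_def\<close>)

lemma line2_smul2: "c \<noteq> 0 \<Longrightarrow> line2 (smul2 c u) = line2 u"
  unfolding line2_def by (auto simp: smul2_smul2 image_iff) (metis nonzero_divide_eq_eq)

lemma line2_eq_spread_dir:
  assumes "u \<noteq> (0,0)" shows "\<exists>t. line2 u = line2 (spread_dir t)"
proof (cases "fst u = 0")
  case True
  have "snd u \<noteq> 0" using True assms by (cases u) auto
  moreover have "spread_dir None = smul2 (1 / snd u) u"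
    using True calculation by (cases u) (simp add: spread_dir_def smul2_def)
  ultimately have "line2 u = line2 (spread_dir None)" using line2_smul2[of "1 / snd u" u] by simp
  thus ?thesis by blast
next
  case False
  hence "spread_dir (Some (sqroot (snd u / fst u))) = smul2 (1 / fst u) u"
    by (simp add: spread_dir_def smul2_def)
  hence "line2 u = line2 (spread_dir (Some (sqroot (snd u / fst u))))"
    using line2_smul2[of "1 / fst u" u] False by simp
  thus ?thesis by blast
qed

lemma span2_eq_line2:
  assumes ind: "indep2 u v" and D: "det2 u v = 0"
  shows "span2 u v = line2 u"
proof -
  have unz: "u \<noteq> (0,0)" by (rule indep2_left_nonzero[OF ind])
  obtain lam where lam: "v = smul2 lam u"
  proof (cases "fst u = 0")
    case True
    have "snd u \<noteq> 0" using True unz by (cases u) auto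
    moreover have "fst v = 0" using D True calculation by (simp add: det2_def)
    ultimately have "v = smul2 (snd v / snd u) u" using True by (cases u, cases v) (simp add: smul2_def)
    thus ?thesis using that by blast
  next
    case False
    have "snd v = fst v / fst u * snd u"
      using D False by (simp add: det2_def add_eq_0_iff_eq field_simps)
    hence "v = smul2 (fst v / fst u) u" using False by (cases u, cases v) (simp add: smul2_def)
    thus ?thesis using that by blast
  qed
  have lnF: "lam \<notin> FQ"
  proof
    assume "lam \<in> FQ"
    moreover have "add2 (smul2 lam u) (smul2 1 v) = (0,0)" unfolding lam by (simp add: smul2_def add2_def)
    ultimately show False using indep2_comb_eq_0_iff[OF ind, of lam 1] by simp
  qed
  have comb: "add2 (smul2 a u) (smul2 b v) = smul2 (a + b * lam) u" for a b
    unfolding lam by (simp add: smul2_def add2_def algebra_simps)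
  show ?thesis
  proof (intro set_eqI iffI)
    fix p assume "p \<in> span2 u v"
    thus "p \<in> line2 u" unfolding span2_def line2_def comb by blast
  next
    fix p assume "p \<in> line2 u"
    then obtain l where p: "p = smul2 l u" unfolding line2_def by blast
    obtain a b where "a \<in> FQ" "b \<in> FQ" "l = a + b * lam" using Fq_basis_spans[OF lnF, of l] by blast
    thus "p \<in> span2 u v" unfolding p using span2_comb[of a b u v] comb by simp
  qed
qed

lemma plane_inter_Qpts_line:
  assumes "ti_pair u v" and "det2 u v = 0"
  shows "\<exists>t. plane (span2 u v) \<inter> Qpts q = spread_line t \<and> span2 u v = line2 (spread_dir t)"
proof -
  have ind: "indep2 u v" using assms(1) by (simp add: ti_pair_def)
  obtain t where t: "line2 u = line2 (spread_dir t)"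
    using line2_eq_spread_dir[OF indep2_left_nonzero[OF ind]] by blast
  have "plane (span2 u v) \<inter> Qpts q = {pt (qvec p) | p. p \<in> line2 (spread_dir t) \<and> p \<noteq> (0,0)}"
    unfolding plane_inter_Qpts_qvec span2_eq_line2[OF ind assms(2)] t ..
  also have "\<dots> = spread_line t"
    unfolding spread_line_eq line2_def using smul2_eq_0_iff[OF spread_dir_nonzero] by blast
  finally show ?thesis using span2_eq_line2[OF ind assms(2)] t by blast
qed

lemma qf3_polar:
  fixes c1 :: 'a
  shows "qf3 c1 c2 c3 c4 c5 c6 (x1+y1) (x2+y2) (x3+y3) - qf3 c1 c2 c3 c4 c5 c6 x1 x2 x3
     - qf3 c1 c2 c3 c4 c5 c6 y1 y2 y3
   = c4*(x1*y2+x2*y1) + c5*(x1*y3+x3*y1) + c6*(x2*y3+x3*y2)"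
proof -
  have "qf3 c1 c2 c3 c4 c5 c6 (x1+y1) (x2+y2) (x3+y3) - qf3 c1 c2 c3 c4 c5 c6 x1 x2 x3
          - qf3 c1 c2 c3 c4 c5 c6 y1 y2 y3
        = c4*(x1*y2+x2*y1) + c5*(x1*y3+x3*y1) + c6*(x2*y3+x3*y2) + 2 * (c1*x1*y1 + c2*x2*y2 + c3*x3*y3)"
    unfolding qf3_def by algebra
  thus ?thesis by (simp add: two_eq_zero)
qed

lemma qf3_smult: "qf3 c1 c2 c3 c4 c5 c6 (k*x) (k*y) (k*z) = (k::'a)^2 * qf3 c1 c2 c3 c4 c5 c6 x y z"
  unfolding qf3_def by algebra

text \<open>In characteristic 2 the polar form is alternating, so \<open>(c6, c5, c4)\<close> spans its radical.\<close>

lemma polar_radical: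
  "c4*(c6*y2+c5*y1) + c5*(c6*y3+c4*y1) + c6*(c5*y3+c4*y2) = (0::'a)"
proof -
  have "c4*(c6*y2+c5*y1) + c5*(c6*y3+c4*y1) + c6*(c5*y3+c4*y2) = 2 * (c4*c6*y2 + c4*c5*y1 + c5*c6*y3)"
    by algebra
  thus ?thesis by (simp add: two_eq_zero)
qed

definition indep3 :: "'a \<Rightarrow> 'a \<Rightarrow> 'a \<Rightarrow> 'a \<Rightarrow> 'a \<Rightarrow> 'a \<Rightarrow> bool" where
  "indep3 p1 p2 p3 r1 r2 r3 \<longleftrightarrow>
     (\<forall>b c. b \<in> FQ \<and> c \<in> FQ \<and> b*p1+c*r1 = 0 \<and> b*p2+c*r2 = 0 \<and> b*p3+c*r3 = 0 \<longrightarrow> b = 0 \<and> c = 0)"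

lemma indep3_swap12: "indep3 p1 p2 p3 r1 r2 r3 \<Longrightarrow> indep3 p2 p1 p3 r2 r1 r3"
  unfolding indep3_def by blast

lemma indep3_swap13: "indep3 p1 p2 p3 r1 r2 r3 \<Longrightarrow> indep3 p3 p2 p1 r3 r2 r1"
  unfolding indep3_def by blast

lemma indep3_cross_nonzero_aux:
  assumes "indep3 p1 p2 p3 r1 r2 r3" "p1 \<in> FQ" "r1 \<in> FQ" "p1 \<noteq> 0"
  shows "p3*r1+p1*r3 \<noteq> 0 \<or> p1*r2+p2*r1 \<noteq> 0"
proof (rule ccontr)
  assume "\<not> ?thesis"
  hence n: "p3*r1+p1*r3 = 0" "p1*r2+p2*r1 = 0" by auto
  define b where "b = r1 / p1"
  have "b*p1+1*r1 = 0" using assms(4) by (simp add: b_def)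
  moreover have "p1 * (b*p2+1*r2) = 0" "p1 * (b*p3+1*r3) = 0"
    using n assms(4) by (simp_all add: b_def field_simps add.commute)
  hence "b*p2+1*r2 = 0" "b*p3+1*r3 = 0" using assms(4) by simp_all
  moreover have "b \<in> FQ" using assms(2,3) by (simp add: b_def)
  ultimately have "b = 0 \<and> (1::'a) = 0"
    using assms(1)[unfolded indep3_def, rule_format, of b 1] by simp
  thus False by simp
qed

lemma indep3_cross_nonzero:
  assumes "indep3 p1 p2 p3 r1 r2 r3" "p1 \<in> FQ" "p2 \<in> FQ" "p3 \<in> FQ" "r1 \<in> FQ" "r2 \<in> FQ" "r3 \<in> FQ"
  shows "p2*r3+p3*r2 \<noteq> 0 \<or> p3*r1+p1*r3 \<noteq> 0 \<or> p1*r2+p2*r1 \<noteq> 0"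
proof -
  consider "p1 \<noteq> 0" | "p2 \<noteq> 0" | "p3 \<noteq> 0" | "p1 = 0 \<and> p2 = 0 \<and> p3 = 0" by blast
  thus ?thesis
  proof cases
    case 1 thus ?thesis using indep3_cross_nonzero_aux[OF assms(1,2,5)] by blast
  next
    case 2 thus ?thesis
      using indep3_cross_nonzero_aux[OF indep3_swap12[OF assms(1)] assms(3,6)] by (auto simp: add.commute)
  next
    case 3 thus ?thesis
      using indep3_cross_nonzero_aux[OF indep3_swap13[OF assms(1)] assms(4,7)] by (auto simp: add.commute)
  next
    case 4
    hence "(1::'a) = 0 \<and> (0::'a) = 0" using assms(1)[unfolded indep3_def, rule_format, of 1 0] by simp
    thus ?thesis by simp
  qed
qed

lemma orthogonal_to_cross_imp_comb:
  assumes F: "p1 \<in> FQ" "p2 \<in> FQ" "p3 \<in> FQ" "r1 \<in> FQ" "r2 \<in> FQ" "r3 \<in> FQ" "c4 \<in> FQ" "c5 \<in> FQ" "c6 \<in> FQ"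
    and rel: "c6*(p2*r3+p3*r2) + c5*(p3*r1+p1*r3) + c4*(p1*r2+p2*r1) = 0"
    and n1: "p2*r3+p3*r2 \<noteq> 0"
  shows "\<exists>s1 s2. s1 \<in> FQ \<and> s2 \<in> FQ \<and> c6 = s1*p1+s2*r1 \<and> c5 = s1*p2+s2*r2 \<and> c4 = s1*p3+s2*r3"
proof -
  define n where "n = p2*r3+p3*r2"
  define ni where "ni = inverse n"
  define s1 where "s1 = (c5*r3+c4*r2) * ni"
  define s2 where "s2 = (p2*c4+p3*c5) * ni"
  have nni: "n * ni = 1" using n1 by (simp add: ni_def n_def)
  have rel': "c6 * n = c5*(p3*r1+p1*r3) + c4*(p1*r2+p2*r1)"
    using rel unfolding n_def add.assoc add_eq_0_iff_eq .
  have "s1*p1+s2*r1 = c6" unfolding s1_def s2_def using nni rel' by algebra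
  moreover have "s1*p2+s2*r2 = c5 + 2 * (ni*c4*p2*r2)" unfolding s1_def s2_def using nni n_def by algebra
  moreover have "s1*p3+s2*r3 = c4 + 2 * (ni*c5*p3*r3)" unfolding s1_def s2_def using nni n_def by algebra
  moreover have "s1 \<in> FQ" "s2 \<in> FQ" using F unfolding s1_def s2_def ni_def n_def by simp_all
  ultimately show ?thesis by (intro exI[of _ s1] exI[of _ s2]) (simp add: two_eq_zero)
qed

lemma radical_in_span:
  assumes F: "p1 \<in> FQ" "p2 \<in> FQ" "p3 \<in> FQ" "r1 \<in> FQ" "r2 \<in> FQ" "r3 \<in> FQ" "c4 \<in> FQ" "c5 \<in> FQ" "c6 \<in> FQ"
    and i: "indep3 p1 p2 p3 r1 r2 r3"
    and rel: "c6*(p2*r3+p3*r2) + c5*(p3*r1+p1*r3) + c4*(p1*r2+p2*r1) = 0"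
  shows "\<exists>s1 s2. s1 \<in> FQ \<and> s2 \<in> FQ \<and> c6 = s1*p1+s2*r1 \<and> c5 = s1*p2+s2*r2 \<and> c4 = s1*p3+s2*r3"
proof -
  from indep3_cross_nonzero[OF i F(1-6)] show ?thesis
  proof (elim disjE)
    assume "p2*r3+p3*r2 \<noteq> 0"
    from orthogonal_to_cross_imp_comb[OF F rel this] show ?thesis .
  next
    assume "p3*r1+p1*r3 \<noteq> 0"
    moreover have "c5*(p1*r3+p3*r1) + c6*(p3*r2+p2*r3) + c4*(p2*r1+p1*r2) = 0"
      using rel by (simp add: algebra_simps)
    ultimately show ?thesis
      using orthogonal_to_cross_imp_comb[OF F(2,1,3,5,4,6) F(7,9,8)] by (auto simp: add.commute)
  next
    assume "p1*r2+p2*r1 \<noteq> 0"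
    moreover have "c4*(p2*r1+p1*r2) + c5*(p1*r3+p3*r1) + c6*(p3*r2+p2*r3) = 0"
      using rel by (simp add: algebra_simps)
    ultimately show ?thesis
      using orthogonal_to_cross_imp_comb[OF F(3,2,1,6,5,4) F(9,8,7)] by (auto simp: add.commute)
  qed
qed

text \<open>A non-singular conic contains no line: the quadratic form vanishing on a line forces
  the line to contain the radical vector \<open>(c6, c5, c4)\<close>, which must then be singular.\<close>

lemma nonsingular_qf3_no_line:
  assumes cF: "c1 \<in> FQ" "c2 \<in> FQ" "c3 \<in> FQ" "c4 \<in> FQ" "c5 \<in> FQ" "c6 \<in> FQ"
    and ns: "qf3_nonsingular q c1 c2 c3 c4 c5 c6"
    and F: "p1 \<in> FQ" "p2 \<in> FQ" "p3 \<in> FQ" "r1 \<in> FQ" "r2 \<in> FQ" "r3 \<in> FQ"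
    and i: "indep3 p1 p2 p3 r1 r2 r3"
    and z: "\<And>b c. b \<in> FQ \<Longrightarrow> c \<in> FQ \<Longrightarrow> qf3 c1 c2 c3 c4 c5 c6 (b*p1+c*r1) (b*p2+c*r2) (b*p3+c*r3) = 0"
  shows False
proof -
  let ?Q = "qf3 c1 c2 c3 c4 c5 c6"
  have qp: "?Q p1 p2 p3 = 0" using z[OF Fq_1 Fq_0] by simp
  have qr: "?Q r1 r2 r3 = 0" using z[OF Fq_0 Fq_1] by simp
  have qpr: "?Q (p1+r1) (p2+r2) (p3+r3) = 0" using z[OF Fq_1 Fq_1] by simp
  have "c6*(p2*r3+p3*r2) + c5*(p3*r1+p1*r3) + c4*(p1*r2+p2*r1) = 0"
    using qf3_polar[of c1 c2 c3 c4 c5 c6 p1 r1 p2 r2 p3 r3] qp qr qpr by (simp add: algebra_simps)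
  then obtain s1 s2 where s: "s1 \<in> FQ" "s2 \<in> FQ" "c6 = s1*p1+s2*r1" "c5 = s1*p2+s2*r2" "c4 = s1*p3+s2*r3"
    using radical_in_span[OF F cF(4-6) i] by blast
  have qrad: "?Q c6 c5 c4 = 0" using z[OF s(1,2)] s(3-5) by simp
  show False
  proof (cases "c6 = 0 \<and> c5 = 0 \<and> c4 = 0")
    case False
    then obtain x' y' z' where "?Q (c6 + x') (c5 + y') (c4 + z') - ?Q c6 c5 c4 - ?Q x' y' z' \<noteq> 0"
      using ns cF qrad unfolding qf3_nonsingular_def by blast
    thus False unfolding qf3_polar using polar_radical[of c4 c6 y' c5 x' z'] by (simp add: algebra_simps)
  next
    case True
    have "\<not> (p1 = 0 \<and> p2 = 0 \<and> p3 = 0)"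
      using i[unfolded indep3_def, rule_format, of 1 0] by auto
    then obtain x' y' z' where "?Q (p1 + x') (p2 + y') (p3 + z') - ?Q p1 p2 p3 - ?Q x' y' z' \<noteq> 0"
      using ns F qp unfolding qf3_nonsingular_def by blast
    thus False unfolding qf3_polar using True by simp
  qed
qed

definition conic_pts ::
  "(nat \<Rightarrow> 'a) \<Rightarrow> (nat \<Rightarrow> 'a) \<Rightarrow> (nat \<Rightarrow> 'a) \<Rightarrow> 'a \<Rightarrow> 'a \<Rightarrow> 'a \<Rightarrow> 'a \<Rightarrow> 'a \<Rightarrow> 'a \<Rightarrow> (nat \<Rightarrow> 'a) set set"
  where "conic_pts u v x c1 c2 c3 c4 c5 c6 =
    {pt (lin3 u v x a b c) | a b c. a \<in> FQ \<and> b \<in> FQ \<and> c \<in> FQ \<and> \<not> (a = 0 \<and> b = 0 \<and> c = 0) \<and>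
       qf3 c1 c2 c3 c4 c5 c6 a b c = 0}"

lemma nondeg_conic_in_iff:
  "nondeg_conic_in q \<pi> C \<longleftrightarrow>
     (\<exists>u v x c1 c2 c3 c4 c5 c6.
        u \<in> SigmaVecs q \<and> v \<in> SigmaVecs q \<and> x \<in> SigmaVecs q \<and> fq_indep q u v x \<and>
        \<pi> = plane_span q u v x \<and>
        c1 \<in> FQ \<and> c2 \<in> FQ \<and> c3 \<in> FQ \<and> c4 \<in> FQ \<and> c5 \<in> FQ \<and> c6 \<in> FQ \<and>
        qf3_nonsingular q c1 c2 c3 c4 c5 c6 \<and> C = conic_pts u v x c1 c2 c3 c4 c5 c6)"
  unfolding nondeg_conic_in_def conic_pts_def ..

lemma conic_pts_coords:
  assumes "u \<in> SigmaVecs q" "v \<in> SigmaVecs q" "x \<in> SigmaVecs q" "fq_indep q u v x"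
    and "y \<in> SigmaVecs q" "pt y \<in> conic_pts u v x c1 c2 c3 c4 c5 c6"
  shows "\<exists>e1 e2 e3. e1 \<in> FQ \<and> e2 \<in> FQ \<and> e3 \<in> FQ \<and> y = lin3 u v x e1 e2 e3 \<and>
           qf3 c1 c2 c3 c4 c5 c6 e1 e2 e3 = 0"
proof -
  obtain a b c where abc: "pt y = pt (lin3 u v x a b c)" "a \<in> FQ" "b \<in> FQ" "c \<in> FQ"
    "\<not> (a = 0 \<and> b = 0 \<and> c = 0)" "qf3 c1 c2 c3 c4 c5 c6 a b c = 0"
    using assms(6) unfolding conic_pts_def by blast
  then obtain k where "k \<in> FQ" "y = lin3 u v x (k * a) (k * b) (k * c)"
    using SigmaVecs_in_plane_span[OF assms(1-5)] by blast
  thus ?thesis using abc(2-4,6) by (intro exI[of _ "k*a"] exI[of _ "k*b"] exI[of _ "k*c"]) (simp add: qf3_smult)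
qed

lemma qvec_comb:
  assumes "b \<in> FQ" "c \<in> FQ"
  shows "qvec (smul2 (b + c*w) x0) = (\<lambda>i. b * qvec x0 i + c * qvec (smul2 w x0) i)"
proof -
  obtain X1 X2 where x0: "x0 = (X1, X2)" by (cases x0)
  define s where "s = sqroot (X1 * X2)"
  have root: "sqroot (tr (fst (smul2 l x0) * snd (smul2 l x0))) = tr (l * s)" for l
  proof -
    have "fst (smul2 l x0) * snd (smul2 l x0) = (l * s) ^ 2"
      using sqroot_square[of "X1 * X2"] by (simp add: x0 smul2_def s_def power2_eq_square algebra_simps)
    thus ?thesis by (simp add: sqroot_tr_square)
  qed
  have "qvec (smul2 (b + c*w) x0) = pvec (b*X1 + c*(w*X1)) (b * tr s + c * tr (w*s)) (b*X2 + c*(w*X2))"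
    unfolding qvec_def vec_def root using assms by (simp add: x0 smul2_def algebra_simps tr_add tr_smult)
  also have "\<dots> = (\<lambda>i. b * pvec X1 (tr s) X2 i + c * pvec (w*X1) (tr (w*s)) (w*X2) i)"
    by (rule pvec_add[OF assms, symmetric])
  also have "\<dots> = (\<lambda>i. b * qvec x0 i + c * qvec (smul2 w x0) i)"
    using root[of 1] root[of w] unfolding qvec_def vec_def by (simp add: x0 smul2_def)
  finally show ?thesis .
qed

text \<open>The points \<open>b P + c (\<omega> P)\<close> (\<open>b, c \<in> F_q\<close>) of a spread line form an \<open>F_q\<close>-line; inside a conic
  their coordinates therefore give a line of zeros of the form.\<close>

lemma spread_line_in_conic_pts_imp_line:
  assumes uvx: "u \<in> SigmaVecs q" "v \<in> SigmaVecs q" "x \<in> SigmaVecs q" "fq_indep q u v x"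
    and C: "spread_line t = conic_pts u v x c1 c2 c3 c4 c5 c6"
  shows "\<exists>p1 p2 p3 r1 r2 r3. p1 \<in> FQ \<and> p2 \<in> FQ \<and> p3 \<in> FQ \<and> r1 \<in> FQ \<and> r2 \<in> FQ \<and> r3 \<in> FQ \<and>
           indep3 p1 p2 p3 r1 r2 r3 \<and>
           (\<forall>b\<in>FQ. \<forall>c\<in>FQ. qf3 c1 c2 c3 c4 c5 c6 (b*p1+c*r1) (b*p2+c*r2) (b*p3+c*r3) = 0)"
proof -
  let ?Q = "qf3 c1 c2 c3 c4 c5 c6" and ?x0 = "spread_dir t"
  let ?V = "\<lambda>b c i. b * qvec ?x0 i + c * qvec (smul2 w ?x0) i"
  have nz: "b + c*w \<noteq> 0" if "b \<in> FQ" "c \<in> FQ" "\<not> (b = 0 \<and> c = 0)" for b c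
    using Fq_basis_indep[OF w_notin_Fq that(1,2)] that(3) by blast
  have coords: "\<exists>e1 e2 e3. e1 \<in> FQ \<and> e2 \<in> FQ \<and> e3 \<in> FQ \<and> ?V b c = lin3 u v x e1 e2 e3 \<and> ?Q e1 e2 e3 = 0"
    if bc: "b \<in> FQ" "c \<in> FQ" "\<not> (b = 0 \<and> c = 0)" for b c
  proof -
    have "pt (qvec (smul2 (b + c*w) ?x0)) \<in> conic_pts u v x c1 c2 c3 c4 c5 c6"
      unfolding C[symmetric] spread_line_eq using nz[OF bc] by blast
    from conic_pts_coords[OF uvx qvec_SigmaVecs this] show ?thesis unfolding qvec_comb[OF bc(1,2)] .
  qed
  obtain p1 p2 p3 where P: "p1 \<in> FQ" "p2 \<in> FQ" "p3 \<in> FQ" "?V 1 0 = lin3 u v x p1 p2 p3"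
    using coords[OF Fq_1 Fq_0] by auto
  obtain r1 r2 r3 where R: "r1 \<in> FQ" "r2 \<in> FQ" "r3 \<in> FQ" "?V 0 1 = lin3 u v x r1 r2 r3"
    using coords[OF Fq_0 Fq_1] by auto
  have comb: "?V b c = lin3 u v x (b*p1+c*r1) (b*p2+c*r2) (b*p3+c*r3)" for b c
    using P(4) R(4) lin3_add[of b u v x p1 p2 p3 c r1 r2 r3] by (simp add: fun_eq_iff)
  have "?Q (b*p1+c*r1) (b*p2+c*r2) (b*p3+c*r3) = 0" if bc: "b \<in> FQ" "c \<in> FQ" for b c
  proof (cases "b = 0 \<and> c = 0")
    case False
    then obtain e1 e2 e3 where e: "e1 \<in> FQ" "e2 \<in> FQ" "e3 \<in> FQ" "?V b c = lin3 u v x e1 e2 e3"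
      "?Q e1 e2 e3 = 0" using coords[OF bc] by blast
    have "b*p1+c*r1 = e1 \<and> b*p2+c*r2 = e2 \<and> b*p3+c*r3 = e3"
      by (rule lin3_inj[OF uvx(4) _ _ _ e(1-3)]) (use bc P R comb e(4) in simp_all)
    thus ?thesis using e(5) by simp
  qed (simp add: qf3_def)
  moreover have "indep3 p1 p2 p3 r1 r2 r3"
    unfolding indep3_def
  proof (intro allI impI)
    fix b c assume bc: "b \<in> FQ \<and> c \<in> FQ \<and> b*p1+c*r1 = 0 \<and> b*p2+c*r2 = 0 \<and> b*p3+c*r3 = 0"
    hence "qvec (smul2 (b + c*w) ?x0) = (\<lambda>_. 0)" using comb[of b c] qvec_comb[of b c] by (simp add: lin3_def)
    hence "b + c*w = 0" by (simp add: qvec_eq_0_iff smul2_eq_0_iff[OF spread_dir_nonzero])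
    thus "b = 0 \<and> c = 0" using Fq_basis_indep[OF w_notin_Fq] bc by blast
  qed
  ultimately show ?thesis using P(1-3) R(1-3) by blast
qed

lemma spread_line_not_nondeg_conic: "\<not> nondeg_conic_in q \<pi> (spread_line t)"
proof
  assume "nondeg_conic_in q \<pi> (spread_line t)"
  then obtain u v x c1 c2 c3 c4 c5 c6 where uvx: "u \<in> SigmaVecs q" "v \<in> SigmaVecs q" "x \<in> SigmaVecs q"
    "fq_indep q u v x" and c: "c1 \<in> FQ" "c2 \<in> FQ" "c3 \<in> FQ" "c4 \<in> FQ" "c5 \<in> FQ" "c6 \<in> FQ"
    "qf3_nonsingular q c1 c2 c3 c4 c5 c6" and C: "spread_line t = conic_pts u v x c1 c2 c3 c4 c5 c6"
    unfolding nondeg_conic_in_iff by blast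
  show False
    using spread_line_in_conic_pts_imp_line[OF uvx C] nonsingular_qf3_no_line[OF c] by blast
qed

text \<open>Since \<open>det2 (x, \<omega> x) = 0\<close>, a subspace with nonzero determinant contains no \<open>x \<noteq> 0\<close>
  together with \<open>\<omega> x\<close>.\<close>

lemma smul2_w_notin_span2:
  assumes D: "det2 u v \<noteq> 0" and x: "x \<in> span2 u v" "smul2 w x \<in> span2 u v"
  shows "x = (0,0)"
proof -
  obtain a b c d where ab: "x = add2 (smul2 a u) (smul2 b v)" "a \<in> FQ" "b \<in> FQ"
    and cd: "smul2 w x = add2 (smul2 c u) (smul2 d v)" "c \<in> FQ" "d \<in> FQ"
    using x unfolding span2_def by blast
  obtain X1 X2 where x0: "x = (X1, X2)" by (cases x)
  obtain u1 u2 v1 v2 where uv: "u = (u1, u2)" "v = (v1, v2)" by (cases u, cases v)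
  have E: "X1 = a*u1+b*v1" "X2 = a*u2+b*v2" "w*X1 = c*u1+d*v1" "w*X2 = c*u2+d*v2"
    using ab(1) cd(1) unfolding x0 uv by (simp_all add: smul2_def add2_def)
  have "det2 (add2 (smul2 a u) (smul2 b v)) (add2 (smul2 c u) (smul2 d v)) = 0"
    unfolding ab(1)[symmetric] cd(1)[symmetric] by (rule det2_smul2_self)
  hence "(a * d + c * b) * det2 u v = 0" by (simp only: det2_comb)
  hence adcb: "a * d + c * b = 0" using D by simp
  have "(d + b*w) * X1 = (a*d + c*b) * u1 + 2 * (b*d*v1)" "(d + b*w) * X2 = (a*d + c*b) * u2 + 2 * (b*d*v2)"
       "(c + a*w) * X1 = (a*d + c*b) * v1 + 2 * (a*c*u1)" "(c + a*w) * X2 = (a*d + c*b) * v2 + 2 * (a*c*u2)"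
    using E by algebra+
  hence "(d + b*w) * X1 = 0" "(d + b*w) * X2 = 0" "(c + a*w) * X1 = 0" "(c + a*w) * X2 = 0"
    using adcb by (simp_all add: two_eq_zero)
  moreover have "d + b*w \<noteq> 0 \<or> b = 0" "c + a*w \<noteq> 0 \<or> a = 0"
    using Fq_basis_indep[OF w_notin_Fq] ab(2,3) cd(2,3) by blast+
  ultimately show ?thesis using E x0 by auto
qed

lemma plane_inter_Qpts_ne_spread_line:
  assumes "det2 u v \<noteq> 0"
  shows "plane (span2 u v) \<inter> Qpts q \<noteq> spread_line t"
proof
  assume eq: "plane (span2 u v) \<inter> Qpts q = spread_line t"
  have "smul2 l (spread_dir t) \<in> span2 u v" if "l \<noteq> 0" for l
  proof -
    have "pt (qvec (smul2 l (spread_dir t))) \<in> plane (span2 u v)"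
      using eq that unfolding spread_line_eq by blast
    thus ?thesis unfolding qvec_def
      by (rule vec_in_plane_imp_span2[rotated 2]) (simp_all add: smul2_eq_0_iff[OF spread_dir_nonzero] that)
  qed
  from this[of 1] this[of w] have "spread_dir t \<in> span2 u v" "smul2 w (spread_dir t) \<in> span2 u v"
    by simp_all
  thus False using smul2_w_notin_span2[OF assms] spread_dir_nonzero by blast
qed

lemma tr_det2_nonzero:
  assumes "ti_pair u v" "det2 u v \<noteq> 0"
  shows "tr (det2 u v) \<noteq> 0"
proof
  assume "tr (det2 u v) = 0"
  hence "tr (w * det2 u v) = det2 u v"
    using tr_smult[of "det2 u v" w] tr_w by (simp add: tr_eq_0_iff mult.commute)
  thus False using assms by (simp add: ti_pair_def)
qed

lemma tr_quadric_comb: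
  assumes "y \<in> FQ" "z \<in> FQ"
  shows "tr (fst (add2 (smul2 y u) (smul2 z v)) * snd (add2 (smul2 y u) (smul2 z v)))
       = tr (fst u * snd u) * y^2 + tr (fst v * snd v) * z^2 + tr (det2 u v) * y * z"
proof -
  have "fst (add2 (smul2 y u) (smul2 z v)) * snd (add2 (smul2 y u) (smul2 z v))
      = y^2 * (fst u * snd u) + z^2 * (fst v * snd v) + (y * z) * det2 u v"
    unfolding add2_def smul2_def det2_def by (simp only: fst_conv snd_conv) algebra
  hence "tr (fst (add2 (smul2 y u) (smul2 z v)) * snd (add2 (smul2 y u) (smul2 z v)))
      = y^2 * tr (fst u * snd u) + z^2 * tr (fst v * snd v) + (y * z) * tr (det2 u v)"
    using assms by (simp add: tr_add tr_smult)
  thus ?thesis by (simp add: algebra_simps)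
qed

lemma qf3_nonsingular_diag:
  fixes A C T :: 'a
  assumes "T \<noteq> 0"
  shows "qf3_nonsingular q 1 A C 0 0 T"
  unfolding qf3_nonsingular_def
proof (intro allI impI)
  fix x y z assume H: "x \<in> FQ \<and> y \<in> FQ \<and> z \<in> FQ \<and> \<not> (x = 0 \<and> y = 0 \<and> z = 0) \<and> qf3 1 A C 0 0 T x y z = 0"
  have polar: "qf3 1 A C 0 0 T (x + x') (y + y') (z + z') - qf3 1 A C 0 0 T x y z - qf3 1 A C 0 0 T x' y' z'
      = T * (y * z' + z * y')" for x' y' z'
    unfolding qf3_polar by (simp add: algebra_simps)
  have "y \<noteq> 0 \<or> z \<noteq> 0"
  proof (rule ccontr)
    assume "\<not> (y \<noteq> 0 \<or> z \<noteq> 0)"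
    hence "x ^ 2 = 0" using H by (simp add: qf3_def)
    thus False using H \<open>\<not> (y \<noteq> 0 \<or> z \<noteq> 0)\<close> by simp
  qed
  thus "\<exists>x' y' z'. x' \<in> FQ \<and> y' \<in> FQ \<and> z' \<in> FQ \<and>
      qf3 1 A C 0 0 T (x + x') (y + y') (z + z') - qf3 1 A C 0 0 T x y z - qf3 1 A C 0 0 T x' y' z' \<noteq> 0"
  proof
    assume "y \<noteq> 0" thus ?thesis using assms polar[of 0 0 1] by (intro exI[of _ 0] exI[of _ 0] exI[of _ 1]) simp
  next
    assume "z \<noteq> 0" thus ?thesis using assms polar[of 0 1 0] by (intro exI[of _ 0] exI[of _ 1] exI[of _ 0]) simp
  qed
qed

text \<open>In the frame \<open>N, vec 0 u, vec 0 v\<close> the conic is \<open>x^2 + A y^2 + C z^2 + T y z\<close> with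
  \<open>A = tr (u1 u2)\<close>, \<open>C = tr (v1 v2)\<close>, \<open>T = tr (det2 u v)\<close>.\<close>

lemma plane_inter_Qpts_conic_pts:
  assumes "indep2 u v"
  shows "plane (span2 u v) \<inter> Qpts q =
    conic_pts (mk6 0 0 1 0 0 0) (vec 0 u) (vec 0 v) 1 (tr (fst u * snd u)) (tr (fst v * snd v)) 0 0 (tr (det2 u v))"
    (is "_ = conic_pts ?N ?U ?V 1 ?A ?C 0 0 ?T")
proof -
  have qf: "qf3 1 ?A ?C 0 0 ?T x y z = 0 \<longleftrightarrow>
            x ^ 2 = tr (fst (add2 (smul2 y u) (smul2 z v)) * snd (add2 (smul2 y u) (smul2 z v)))"
    if "y \<in> FQ" "z \<in> FQ" for x y z
    unfolding tr_quadric_comb[OF that] qf3_def by (simp add: add_eq_0_iff_eq algebra_simps)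
  show ?thesis
    unfolding plane_inter_Qpts conic_pts_def
  proof (intro set_eqI iffI)
    fix P assume "P \<in> {pt (vec x p) |x p. x \<in> FQ \<and> p \<in> span2 u v \<and> \<not> (x = 0 \<and> p = (0, 0)) \<and>
      x\<^sup>2 = tr (fst p * snd p)}"
    then obtain x y z where h: "P = pt (vec x (add2 (smul2 y u) (smul2 z v)))" "x \<in> FQ" "y \<in> FQ" "z \<in> FQ"
      "\<not> (x = 0 \<and> add2 (smul2 y u) (smul2 z v) = (0, 0))"
      "x\<^sup>2 = tr (fst (add2 (smul2 y u) (smul2 z v)) * snd (add2 (smul2 y u) (smul2 z v)))"
      unfolding span2_def by blast
    hence "P = pt (lin3 ?N ?U ?V x y z)" "\<not> (x = 0 \<and> y = 0 \<and> z = 0)" "qf3 1 ?A ?C 0 0 ?T x y z = 0"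
      using lin3_N_vec[OF h(2-4)] qf[OF h(3,4)] by (auto simp: smul2_def add2_def)
    thus "P \<in> {pt (lin3 ?N ?U ?V a b c) |a b c. a \<in> FQ \<and> b \<in> FQ \<and> c \<in> FQ \<and>
      \<not> (a = 0 \<and> b = 0 \<and> c = 0) \<and> qf3 1 ?A ?C 0 0 ?T a b c = 0}" using h(2-4) by blast
  next
    fix P assume "P \<in> {pt (lin3 ?N ?U ?V a b c) |a b c. a \<in> FQ \<and> b \<in> FQ \<and> c \<in> FQ \<and>
      \<not> (a = 0 \<and> b = 0 \<and> c = 0) \<and> qf3 1 ?A ?C 0 0 ?T a b c = 0}"
    then obtain x y z where h: "P = pt (lin3 ?N ?U ?V x y z)" "x \<in> FQ" "y \<in> FQ" "z \<in> FQ"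
      "\<not> (x = 0 \<and> y = 0 \<and> z = 0)" "qf3 1 ?A ?C 0 0 ?T x y z = 0" by blast
    hence "P = pt (vec x (add2 (smul2 y u) (smul2 z v)))"
      "\<not> (x = 0 \<and> add2 (smul2 y u) (smul2 z v) = (0, 0))"
      "x\<^sup>2 = tr (fst (add2 (smul2 y u) (smul2 z v)) * snd (add2 (smul2 y u) (smul2 z v)))"
      using lin3_N_vec[OF h(2-4)] indep2_comb_eq_0_iff[OF assms h(3,4)] qf[OF h(3,4)] by auto
    thus "P \<in> {pt (vec x p) |x p. x \<in> FQ \<and> p \<in> span2 u v \<and> \<not> (x = 0 \<and> p = (0, 0)) \<and>
      x\<^sup>2 = tr (fst p * snd p)}" using h(2) span2_comb[OF h(3,4)] by blast
  qed
qed

lemma plane_inter_Qpts_nondeg_conic: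
  assumes "ti_pair u v" "det2 u v \<noteq> 0"
  shows "nondeg_conic_in q (plane (span2 u v)) (plane (span2 u v) \<inter> Qpts q)"
proof -
  have ind: "indep2 u v" using assms(1) by (simp add: ti_pair_def)
  let ?N = "mk6 0 0 1 0 0 (0::'a)" and ?A = "tr (fst u * snd u)" and ?C = "tr (fst v * snd v)"
    and ?T = "tr (det2 u v)"
  have "?N \<in> SigmaVecs q \<and> vec 0 u \<in> SigmaVecs q \<and> vec 0 v \<in> SigmaVecs q \<and>
    fq_indep q ?N (vec 0 u) (vec 0 v) \<and> plane (span2 u v) = plane_span q ?N (vec 0 u) (vec 0 v) \<and>
    1 \<in> FQ \<and> ?A \<in> FQ \<and> ?C \<in> FQ \<and> 0 \<in> FQ \<and> 0 \<in> FQ \<and> ?T \<in> FQ \<and>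
    qf3_nonsingular q 1 ?A ?C 0 0 ?T \<and>
    plane (span2 u v) \<inter> Qpts q = conic_pts ?N (vec 0 u) (vec 0 v) 1 ?A ?C 0 0 ?T"
    using N_SigmaVecs vec_SigmaVecs[OF Fq_0] fq_indep_N_vec_iff[of u v] plane_span_N_vec[OF ind]
      plane_inter_Qpts_conic_pts[OF ind] qf3_nonsingular_diag[OF tr_det2_nonzero[OF assms]] ind
    by simp
  thus ?thesis unfolding nondeg_conic_in_iff by (intro exI) assumption
qed

definition line_planes :: "(nat \<Rightarrow> 'a) set set set" where
  "line_planes = {plane (span2 u v) | u v. ti_pair u v \<and> det2 u v = 0}"

definition conic_planes :: "(nat \<Rightarrow> 'a) set set set" where
  "conic_planes = {plane (span2 u v) | u v. ti_pair u v \<and> det2 u v \<noteq> 0}"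

lemma line_planes_eq: "{\<pi> \<in> WPlanesN q w. \<exists>L\<in>Spread q. \<pi> \<inter> Qpts q = L} = line_planes"
proof (intro set_eqI iffI)
  fix \<pi> assume "\<pi> \<in> {\<pi> \<in> WPlanesN q w. \<exists>L\<in>Spread q. \<pi> \<inter> Qpts q = L}"
  then obtain u v t where "ti_pair u v" "\<pi> = plane (span2 u v)" "\<pi> \<inter> Qpts q = spread_line t"
    using WPlanesN_imp_plane unfolding Spread_eq_range by blast
  thus "\<pi> \<in> line_planes" unfolding line_planes_def using plane_inter_Qpts_ne_spread_line by blast
next
  fix \<pi> assume "\<pi> \<in> line_planes"
  then obtain u v where uv: "ti_pair u v" "det2 u v = 0" "\<pi> = plane (span2 u v)"
    unfolding line_planes_def by blast
  thus "\<pi> \<in> {\<pi> \<in> WPlanesN q w. \<exists>L\<in>Spread q. \<pi> \<inter> Qpts q = L}"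
    using plane_in_WPlanesN plane_inter_Qpts_line[OF uv(1,2)] unfolding Spread_eq_range by blast
qed

lemma conic_planes_eq: "{\<pi> \<in> WPlanesN q w. nondeg_conic_in q \<pi> (\<pi> \<inter> Qpts q)} = conic_planes"
proof (intro set_eqI iffI)
  fix \<pi> assume "\<pi> \<in> {\<pi> \<in> WPlanesN q w. nondeg_conic_in q \<pi> (\<pi> \<inter> Qpts q)}"
  then obtain u v where uv: "ti_pair u v" "\<pi> = plane (span2 u v)" "nondeg_conic_in q \<pi> (\<pi> \<inter> Qpts q)"
    using WPlanesN_imp_plane by blast
  have "det2 u v \<noteq> 0"
    using plane_inter_Qpts_line[OF uv(1)] uv(2,3) spread_line_not_nondeg_conic by metis
  thus "\<pi> \<in> conic_planes" unfolding conic_planes_def using uv(1,2) by blast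
next
  fix \<pi> assume "\<pi> \<in> conic_planes"
  then obtain u v where uv: "ti_pair u v" "det2 u v \<noteq> 0" "\<pi> = plane (span2 u v)"
    unfolding conic_planes_def by blast
  thus "\<pi> \<in> {\<pi> \<in> WPlanesN q w. nondeg_conic_in q \<pi> (\<pi> \<inter> Qpts q)}"
    using plane_in_WPlanesN plane_inter_Qpts_nondeg_conic by blast
qed

section \<open>The action of \<open>G\<close>\<close>

lemma mat_app_pvec:
  "mat_app (Mmat q w a b c d) (pvec x e z) =
   pvec (a^2*x + c^2*z) (e + tr (a*b*x) + tr (c*d*z)) (b^2*x + d^2*z)"
proof (rule ext)
  fix i :: nat
  have pw: "\<And>y::'a. (y ^ 2) ^ q = y ^ (2 * q)" by (simp add: power_mult)
  have sum: "(\<Sum>j = Suc 0..6. f j) = f 1 + f 2 + f 3 + f 4 + f 5 + (f 6 :: 'a)" for f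
    using sum_1_6[of f] by simp
  consider "i = 1" | "i = 2" | "i = 3" | "i = 4" | "i = 5" | "i = 6" | "i < 1 \<or> i > 6" by linarith
  thus "mat_app (Mmat q w a b c d) (pvec x e z) i =
        pvec (a^2*x + c^2*z) (e + tr (a*b*x) + tr (c*d*z)) (b^2*x + d^2*z) i"
    by cases (simp_all add: mat_app_def sum Mmat_def pvec_def frobenius_add power_mult_distrib pw
        tr_def algebra_simps, auto simp: mk6_def)
qed

definition lin2 :: "'a \<Rightarrow> 'a \<Rightarrow> 'a \<Rightarrow> 'a \<Rightarrow> 'a \<times> 'a \<Rightarrow> 'a \<times> 'a" where
  "lin2 s11 s12 s21 s22 p = (s11 * fst p + s12 * snd p, s21 * fst p + s22 * snd p)"

abbreviation pair_act :: "'a \<Rightarrow> 'a \<Rightarrow> 'a \<Rightarrow> 'a \<Rightarrow> 'a \<times> 'a \<Rightarrow> 'a \<times> 'a" where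
  "pair_act a b c d \<equiv> lin2 (a^2) (c^2) (b^2) (d^2)"

lemma act_pt_vec:
  "act_pt (Mmat q w a b c d) (pt (vec x p)) =
   pt (vec (x + tr (a*b*fst p) + tr (c*d*snd p)) (pair_act a b c d p))"
  unfolding act_pt_pt vec_def mat_app_pvec lin2_def by simp

lemma lin2_comb:
  "lin2 s11 s12 s21 s22 (add2 (smul2 y u) (smul2 z v)) =
   add2 (smul2 y (lin2 s11 s12 s21 s22 u)) (smul2 z (lin2 s11 s12 s21 s22 v))"
  by (simp add: lin2_def add2_def smul2_def algebra_simps)

lemma lin2_inverse:
  assumes "s11 * s22 + s12 * s21 = 1"
  shows "lin2 s22 s12 s21 s11 (lin2 s11 s12 s21 s22 p) = p"
proof -
  have "s22 * (s11 * fst p + s12 * snd p) + s12 * (s21 * fst p + s22 * snd p) =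
        (s11 * s22 + s12 * s21) * fst p + 2 * (s12*s22*snd p)"
    "s21 * (s11 * fst p + s12 * snd p) + s11 * (s21 * fst p + s22 * snd p) =
        (s11 * s22 + s12 * s21) * snd p + 2 * (s11*s21*fst p)"
    by algebra+
  thus ?thesis unfolding lin2_def using assms by (simp add: two_eq_zero)
qed

lemma lin2_eq_0_iff:
  assumes "s11 * s22 + s12 * s21 = 1"
  shows "lin2 s11 s12 s21 s22 p = (0,0) \<longleftrightarrow> p = (0,0)"
  using lin2_inverse[OF assms, of p] by (auto simp: lin2_def)

lemma det2_lin2:
  "det2 (lin2 s11 s12 s21 s22 u) (lin2 s11 s12 s21 s22 v) = (s11 * s22 + s12 * s21) * det2 u v"
proof -
  have "det2 (lin2 s11 s12 s21 s22 u) (lin2 s11 s12 s21 s22 v) = (s11 * s22 + s12 * s21) * det2 u v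
        + 2 * (s11*s21*fst u*fst v + s12*s22*snd u*snd v)"
    unfolding lin2_def det2_def by (simp only: fst_conv snd_conv) algebra
  thus ?thesis by (simp add: two_eq_zero)
qed

lemma det_square: "a * d + b * c = 1 \<Longrightarrow> a^2 * d^2 + c^2 * b^2 = (1::'a)"
  using square_add[of "a * d" "b * c"] by (simp add: power_mult_distrib algebra_simps)

lemma act_plane:
  assumes det: "a * d + b * c = 1"
  shows "act_pt (Mmat q w a b c d) ` plane (span2 u v) =
         plane (span2 (pair_act a b c d u) (pair_act a b c d v))"
proof -
  let ?S = "pair_act a b c d"
  let ?t = "\<lambda>p. tr (a*b*fst p) + tr (c*d*snd p)"
  have S0: "?S p = (0,0) \<longleftrightarrow> p = (0,0)" for p by (rule lin2_eq_0_iff[OF det_square[OF det]])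
  have img: "act_pt (Mmat q w a b c d) (pt (vec x p)) = pt (vec (x + ?t p) (?S p))" for x p
    by (simp add: act_pt_vec add.assoc)
  have span: "?S ` span2 u v = span2 (?S u) (?S v)"
    unfolding span2_def lin2_comb[symmetric] by blast
  show ?thesis
  proof (intro set_eqI iffI)
    fix P' assume "P' \<in> act_pt (Mmat q w a b c d) ` plane (span2 u v)"
    then obtain x p where h: "P' = act_pt (Mmat q w a b c d) (pt (vec x p))" "x \<in> FQ" "p \<in> span2 u v"
      "\<not> (x = 0 \<and> p = (0,0))" unfolding plane_def by blast
    have "pt (vec (x + ?t p) (?S p)) \<in> plane (span2 (?S u) (?S v))"
      using h(2-4) S0 span by (intro vec_in_plane) auto
    thus "P' \<in> plane (span2 (?S u) (?S v))" unfolding h(1) img .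
  next
    fix P' assume "P' \<in> plane (span2 (?S u) (?S v))"
    then obtain x' p where h: "P' = pt (vec x' (?S p))" "x' \<in> FQ" "p \<in> span2 u v" "\<not> (x' = 0 \<and> ?S p = (0,0))"
      unfolding plane_def span[symmetric] by blast
    have eq: "x' + ?t p + ?t p = x'" by (simp add: add.assoc)
    have "P' = act_pt (Mmat q w a b c d) (pt (vec (x' + ?t p) p))" by (simp only: img h(1) eq)
    moreover have "pt (vec (x' + ?t p) p) \<in> plane (span2 u v)"
      using h(2-4) S0 by (intro vec_in_plane) auto
    ultimately show "P' \<in> act_pt (Mmat q w a b c d) ` plane (span2 u v)" by blast
  qed
qed

lemma ti_pair_lin2:
  assumes "ti_pair u v" and det: "s11 * s22 + s12 * s21 = 1"
  shows "ti_pair (lin2 s11 s12 s21 s22 u) (lin2 s11 s12 s21 s22 v) \<and>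
         det2 (lin2 s11 s12 s21 s22 u) (lin2 s11 s12 s21 s22 v) = det2 u v"
proof -
  let ?S = "lin2 s11 s12 s21 s22"
  have ind: "indep2 u v" using assms(1) by (simp add: ti_pair_def)
  have "indep2 (?S u) (?S v)"
    unfolding indep2_def
  proof (intro allI impI)
    fix y z assume h: "y \<in> FQ \<and> z \<in> FQ \<and> add2 (smul2 y (?S u)) (smul2 z (?S v)) = (0,0)"
    hence "add2 (smul2 y u) (smul2 z v) = (0,0)" using lin2_eq_0_iff[OF det] by (simp add: lin2_comb[symmetric])
    thus "y = 0 \<and> z = 0" using indep2_comb_eq_0_iff[OF ind] h by blast
  qed
  thus ?thesis using assms det2_lin2 unfolding ti_pair_def by simp
qed

text \<open>The matrix is given by Cramer's rule.\<close>

lemma lin2_transitive: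
  assumes "det2 u v \<noteq> 0" "det2 u' v' = det2 u v"
  shows "\<exists>s11 s12 s21 s22. s11 * s22 + s12 * s21 = 1 \<and>
           lin2 s11 s12 s21 s22 u = u' \<and> lin2 s11 s12 s21 s22 v = v'"
proof -
  obtain u1 u2 v1 v2 x1 x2 y1 y2 where uv: "u = (u1, u2)" "v = (v1, v2)" "u' = (x1, x2)" "v' = (y1, y2)"
    by (cases u, cases v, cases u', cases v') auto
  define D where "D = u1*v2 + v1*u2"
  have D': "D = x1*y2 + y1*x2" using assms(2) by (simp add: D_def det2_def uv)
  define ni where "ni = inverse D"
  have nni: "D * ni = 1" using assms(1) by (simp add: D_def ni_def det2_def uv)
  define s11 where "s11 = (x1*v2 + y1*u2) * ni"
  define s12 where "s12 = (x1*v1 + y1*u1) * ni"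
  define s21 where "s21 = (x2*v2 + y2*u2) * ni"
  define s22 where "s22 = (x2*v1 + y2*u1) * ni"
  have "s11*u1 + s12*u2 = x1 + 2*(ni*y1*u1*u2)" "s21*u1 + s22*u2 = x2 + 2*(ni*y2*u1*u2)"
       "s11*v1 + s12*v2 = y1 + 2*(ni*x1*v1*v2)" "s21*v1 + s22*v2 = y2 + 2*(ni*x2*v1*v2)"
       "s11*s22 + s12*s21 = 1 + 2*(ni*ni*(x1*x2*v1*v2 + y1*y2*u1*u2))"
    unfolding s11_def s12_def s21_def s22_def using nni D_def D' by algebra+
  hence "s11 * s22 + s12 * s21 = 1" "lin2 s11 s12 s21 s22 u = u'" "lin2 s11 s12 s21 s22 v = v'"
    unfolding lin2_def uv by (simp_all add: two_eq_zero)
  thus ?thesis by blast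
qed

lemma pair_act_transitive:
  assumes "det2 u v \<noteq> 0" "det2 u' v' = det2 u v"
  shows "\<exists>a b c d. a*d + b*c = 1 \<and> pair_act a b c d u = u' \<and> pair_act a b c d v = v'"
proof -
  obtain s11 s12 s21 s22 where s: "s11 * s22 + s12 * s21 = 1"
    "lin2 s11 s12 s21 s22 u = u'" "lin2 s11 s12 s21 s22 v = v'"
    using lin2_transitive[OF assms] by blast
  have "sqroot s11 * sqroot s22 + sqroot s21 * sqroot s12 = sqroot (s11 * s22 + s12 * s21)"
    by (simp add: sqroot_add sqroot_mult mult.commute)
  thus ?thesis using s by (intro exI[of _ "sqroot s11"] exI[of _ "sqroot s21"] exI[of _ "sqroot s12"]
      exI[of _ "sqroot s22"]) simp
qed

lemma Gorbit_plane:
  "Gorbit q w (plane (span2 u v)) =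
   {plane (span2 (pair_act a b c d u) (pair_act a b c d v)) | a b c d. a*d + b*c = 1}"
  unfolding Gorbit_def Gmats_def using act_plane by blast

lemma Gorbit_plane_imp:
  assumes "ti_pair u v" "X \<in> Gorbit q w (plane (span2 u v))"
  shows "\<exists>u' v'. ti_pair u' v' \<and> det2 u' v' = det2 u v \<and> X = plane (span2 u' v')"
  using assms(2) ti_pair_lin2[OF assms(1) det_square] unfolding Gorbit_plane by blast

lemma Gorbit_line_plane:
  assumes "ti_pair u v" "det2 u v = 0"
  shows "Gorbit q w (plane (span2 u v)) = line_planes"
proof (intro set_eqI iffI)
  fix X assume "X \<in> Gorbit q w (plane (span2 u v))"
  then obtain u' v' where "ti_pair u' v'" "det2 u' v' = det2 u v" "X = plane (span2 u' v')"
    using Gorbit_plane_imp[OF assms(1)] by blast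
  moreover have "det2 u' v' = 0" using calculation(2) assms(2) by simp
  ultimately show "X \<in> line_planes" unfolding line_planes_def by blast
next
  fix X assume "X \<in> line_planes"
  then obtain u' v' where h: "ti_pair u' v'" "det2 u' v' = 0" "X = plane (span2 u' v')"
    unfolding line_planes_def by blast
  have ind: "indep2 u v" "indep2 u' v'" using assms(1) h(1) by (simp_all add: ti_pair_def)
  obtain e e' where e: "det2 u e = 1" "det2 u' e' = 1"
    using det2_eq_1[OF indep2_left_nonzero[OF ind(1)]] det2_eq_1[OF indep2_left_nonzero[OF ind(2)]] by blast
  obtain a b c d where abcd: "a*d + b*c = 1" "pair_act a b c d u = u'"
    using pair_act_transitive[of u e u' e'] e by auto
  let ?S = "pair_act a b c d"
  have "ti_pair (?S u) (?S v)" "det2 (?S u) (?S v) = 0"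
    using ti_pair_lin2[OF assms(1) det_square[OF abcd(1)]] assms(2) by auto
  hence "span2 (?S u) (?S v) = line2 u'" using span2_eq_line2 abcd(2) by (simp add: ti_pair_def)
  also have "\<dots> = span2 u' v'" using span2_eq_line2[OF ind(2) h(2)] by simp
  finally have "X = plane (span2 (?S u) (?S v))" using h(3) by simp
  thus "X \<in> Gorbit q w (plane (span2 u v))" unfolding Gorbit_plane using abcd(1) by blast
qed

lemma Gorbit_conic_plane:
  assumes "ti_pair u v" "det2 u v \<noteq> 0"
  shows "Gorbit q w (plane (span2 u v)) = conic_planes"
proof (intro set_eqI iffI)
  fix X assume "X \<in> Gorbit q w (plane (span2 u v))"
  then obtain u' v' where "ti_pair u' v'" "det2 u' v' = det2 u v" "X = plane (span2 u' v')"
    using Gorbit_plane_imp[OF assms(1)] by blast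
  moreover have "det2 u' v' \<noteq> 0" using calculation(2) assms(2) by simp
  ultimately show "X \<in> conic_planes" unfolding conic_planes_def by blast
next
  fix X assume "X \<in> conic_planes"
  then obtain u' v' where h: "ti_pair u' v'" "det2 u' v' \<noteq> 0" "X = plane (span2 u' v')"
    unfolding conic_planes_def by blast
  define k where "k = (w * det2 u v) / (w * det2 u' v')"
  have k_Fq: "k \<in> FQ" unfolding k_def
    by (rule Fq_divide) (use assms(1) h(1) in \<open>simp_all add: ti_pair_def tr_eq_0_iff\<close>)
  have k_nonzero: "k \<noteq> 0" using assms(2) h(2) by (simp add: k_def)
  have "det2 u' (smul2 k v') = det2 u v"
    unfolding det2_smul2_right k_def using h(2) by (simp add: field_simps)
  then obtain a b c d where abcd: "a*d + b*c = 1" "pair_act a b c d u = u'"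
    "pair_act a b c d v = smul2 k v'"
    using pair_act_transitive[OF assms(2)] by blast
  hence "X = plane (span2 (pair_act a b c d u) (pair_act a b c d v))"
    unfolding h(3) using span2_smul2_right[OF k_Fq k_nonzero] by simp
  thus "X \<in> Gorbit q w (plane (span2 u v))" unfolding Gorbit_plane using abcd(1) by blast
qed

section \<open>Counting\<close>

lemma ti_pair_smul2_w:
  assumes "x \<noteq> (0,0)"
  shows "ti_pair x (smul2 w x) \<and> det2 x (smul2 w x) = 0"
proof -
  have "indep2 x (smul2 w x)"
    unfolding indep2_def
  proof (intro allI impI)
    fix a b assume h: "a \<in> FQ \<and> b \<in> FQ \<and> add2 (smul2 a x) (smul2 b (smul2 w x)) = (0,0)"
    have "add2 (smul2 a x) (smul2 b (smul2 w x)) = smul2 (a + b * w) x"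
      by (simp add: smul2_def add2_def algebra_simps)
    hence "smul2 (a + b * w) x = (0,0)" using h by simp
    hence "a + b * w = 0" using smul2_eq_0_iff[OF assms] by blast
    thus "a = 0 \<and> b = 0" using Fq_basis_indep[OF w_notin_Fq] h by blast
  qed
  thus ?thesis unfolding ti_pair_def using det2_smul2_self[of x w] by simp
qed

lemma line_planes_eq_range: "line_planes = range (\<lambda>t. plane (line2 (spread_dir t)))"
proof (intro set_eqI iffI)
  fix X assume "X \<in> line_planes"
  then obtain u v where "ti_pair u v" "det2 u v = 0" "X = plane (span2 u v)"
    unfolding line_planes_def by blast
  then obtain t where "X = plane (line2 (spread_dir t))" using plane_inter_Qpts_line by metis
  thus "X \<in> range (\<lambda>t. plane (line2 (spread_dir t)))" by blast
next
  fix X assume "X \<in> range (\<lambda>t. plane (line2 (spread_dir t)))"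
  then obtain t where X: "X = plane (line2 (spread_dir t))" by blast
  let ?x = "spread_dir t"
  have "ti_pair ?x (smul2 w ?x)" "det2 ?x (smul2 w ?x) = 0"
    using ti_pair_smul2_w[OF spread_dir_nonzero] by auto
  moreover have "X = plane (span2 ?x (smul2 w ?x))"
    using X span2_eq_line2 calculation by (simp add: ti_pair_def)
  ultimately show "X \<in> line_planes" unfolding line_planes_def by blast
qed

lemma card_line_planes: "card line_planes = q ^ 2 + 1"
proof -
  have "inj (\<lambda>t. plane (line2 (spread_dir t)))"
  proof (rule injI)
    fix t t' assume "plane (line2 (spread_dir t)) = plane (line2 (spread_dir t'))"
    moreover have "line2 (spread_dir s) = span2 (spread_dir s) (smul2 w (spread_dir s))" for s
      using ti_pair_smul2_w[OF spread_dir_nonzero] span2_eq_line2 by (simp add: ti_pair_def)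
    ultimately have "spread_dir t' \<in> line2 (spread_dir t)"
      using plane_eq_iff span2_left by metis
    then obtain l where "spread_dir t' = smul2 l (spread_dir t)" unfolding line2_def by blast
    thus "t = t'" using spread_dir_smul2_imp_eq by metis
  qed
  hence "card line_planes = CARD('a option)" unfolding line_planes_eq_range by (rule card_image)
  thus ?thesis using card_UNIV_eq by simp
qed

lemma det_eq_set_split:
  assumes "\<And>x y. x \<in> K \<Longrightarrow> y \<in> K \<Longrightarrow> x + y \<in> K" "\<And>x y. x \<in> K \<Longrightarrow> y \<in> K \<Longrightarrow> x * y \<in> K"
    "\<And>x y. x \<in> K \<Longrightarrow> y \<in> K \<Longrightarrow> x / y \<in> K" "r \<in> K" "r \<noteq> 0"
  shows "{(a, b, c, d). a \<in> K \<and> b \<in> K \<and> c \<in> K \<and> d \<in> K \<and> a * d + b * c = (r::'a)} =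
    (\<lambda>(a, b, c). (a, b, c, (r + b * c) / a)) ` ((K - {0}) \<times> K \<times> K) \<union>
    (\<lambda>(b, d). (0, b, r / b, d)) ` ((K - {0}) \<times> K)"
proof (intro set_eqI iffI)
  fix t assume "t \<in> {(a, b, c, d). a \<in> K \<and> b \<in> K \<and> c \<in> K \<and> d \<in> K \<and> a * d + b * c = r}"
  then obtain a b c d where t: "t = (a, b, c, d)" "a \<in> K" "b \<in> K" "c \<in> K" "d \<in> K" "a * d + b * c = r"
    by blast
  show "t \<in> (\<lambda>(a, b, c). (a, b, c, (r + b * c) / a)) ` ((K - {0}) \<times> K \<times> K) \<union>
    (\<lambda>(b, d). (0, b, r / b, d)) ` ((K - {0}) \<times> K)"
  proof (cases "a = 0")
    case False
    have "a * d = r + b * c" using t(6) by (metis add_eq_0_iff_eq add.assoc add_self_eq_0 add_0_right)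
    hence "d = (r + b * c) / a" using False by (simp add: field_simps)
    thus ?thesis using t False by force
  next
    case True
    hence "b * c = r" "b \<noteq> 0" using t(6) assms(5) by auto
    hence "c = r / b" by (simp add: field_simps)
    thus ?thesis using t True \<open>b \<noteq> 0\<close> by force
  qed
next
  have K0: "0 \<in> K" using assms(1)[OF assms(4,4)] by simp
  fix t assume "t \<in> (\<lambda>(a, b, c). (a, b, c, (r + b * c) / a)) ` ((K - {0}) \<times> K \<times> K) \<union>
    (\<lambda>(b, d). (0, b, r / b, d)) ` ((K - {0}) \<times> K)"
  thus "t \<in> {(a, b, c, d). a \<in> K \<and> b \<in> K \<and> c \<in> K \<and> d \<in> K \<and> a * d + b * c = r}"
  proof
    assume "t \<in> (\<lambda>(a, b, c). (a, b, c, (r + b * c) / a)) ` ((K - {0}) \<times> K \<times> K)"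
    then obtain a b c where h: "t = (a, b, c, (r + b * c) / a)" "a \<in> K" "a \<noteq> 0" "b \<in> K" "c \<in> K"
      by auto
    have "a * ((r + b * c) / a) + b * c = r + (b * c + b * c)" using h(3) by (simp add: add.assoc)
    thus ?thesis using h assms by simp
  next
    assume "t \<in> (\<lambda>(b, d). (0, b, r / b, d)) ` ((K - {0}) \<times> K)"
    thus ?thesis using assms K0 by auto
  qed
qed

lemma card_det_eq:
  assumes "finite K" "\<And>x y. x \<in> K \<Longrightarrow> y \<in> K \<Longrightarrow> x + y \<in> K" "\<And>x y. x \<in> K \<Longrightarrow> y \<in> K \<Longrightarrow> x * y \<in> K"
    "\<And>x y. x \<in> K \<Longrightarrow> y \<in> K \<Longrightarrow> x / y \<in> K" "r \<in> K" "r \<noteq> 0"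
  shows "card {(a, b, c, d). a \<in> K \<and> b \<in> K \<and> c \<in> K \<and> d \<in> K \<and> a * d + b * c = (r::'a)}
     = (card K - 1) * card K * card K + (card K - 1) * card K"
proof -
  have K0: "0 \<in> K" using assms(2)[OF assms(5,5)] by simp
  let ?S1 = "(\<lambda>(a, b, c). (a, b, c, (r + b * c) / a)) ` ((K - {0}) \<times> K \<times> K)"
  let ?S2 = "(\<lambda>(b, d). (0::'a, b, r / b, d)) ` ((K - {0}) \<times> K)"
  have "card ?S1 = (card K - 1) * card K * card K"
    by (subst card_image) (auto simp: inj_on_def card_cartesian_product assms(1) K0)
  moreover have "card ?S2 = (card K - 1) * card K"
    by (subst card_image) (auto simp: inj_on_def card_cartesian_product assms(1) K0)
  moreover have "?S1 \<inter> ?S2 = {}" by auto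
  ultimately show ?thesis
    using det_eq_set_split[OF assms(2-6)] assms(1) by (simp add: card_Un_disjoint)
qed

definition SL2q :: "('a \<times> 'a \<times> 'a \<times> 'a) set" where
  "SL2q = {(a, b, c, d). a \<in> FQ \<and> b \<in> FQ \<and> c \<in> FQ \<and> d \<in> FQ \<and> a * d + b * c = 1}"

text \<open>Normalised frames of conic planes: the determinant \<open>1/\<omega>\<close> is reached by rescaling with an
  element of \<open>F_q\<close>, and two frames of one plane differ by an element of \<open>SL(2, q)\<close>.\<close>

definition frames :: "(('a \<times> 'a) \<times> ('a \<times> 'a)) set" where
  "frames = {(u, v). det2 u v = inverse w}"

definition frame_change :: "'a \<times> 'a \<Rightarrow> 'a \<times> 'a \<Rightarrow> 'a \<times> 'a \<times> 'a \<times> 'a \<Rightarrow> ('a \<times> 'a) \<times> ('a \<times> 'a)" where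
  "frame_change u v = (\<lambda>(a, b, c, d). (add2 (smul2 a u) (smul2 b v), add2 (smul2 c u) (smul2 d v)))"

lemma card_SL2q: "card SL2q = (q - 1) * q * q + (q - 1) * q"
  using card_det_eq[of FQ 1] card_Fq unfolding SL2q_def by (simp add: finite_subset[OF subset_UNIV])

lemma card_frames: "card frames = (q^2 - 1) * q^2 * q^2 + (q^2 - 1) * q^2"
proof -
  let ?SL = "{(a, b, c, d). a \<in> (UNIV::'a set) \<and> b \<in> UNIV \<and> c \<in> UNIV \<and> d \<in> UNIV \<and> a * d + b * c = inverse w}"
  let ?h = "\<lambda>(a::'a, b::'a, c::'a, d::'a). ((a, c), (b, d))"
  have "frames = ?h ` ?SL"
    unfolding frames_def det2_def by (auto simp: image_iff)
  moreover have "inj_on ?h ?SL" by (rule inj_onI) auto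
  ultimately have "card frames = card ?SL" by (simp add: card_image)
  thus ?thesis using card_det_eq[of UNIV "inverse w"] card_UNIV_eq by simp
qed

lemma plane_frames: "(\<lambda>(u, v). plane (span2 u v)) ` frames = conic_planes"
proof (intro set_eqI iffI)
  fix X assume "X \<in> (\<lambda>(u, v). plane (span2 u v)) ` frames"
  then obtain u v where h: "det2 u v = inverse w" "X = plane (span2 u v)" unfolding frames_def by auto
  hence "ti_pair u v" "det2 u v \<noteq> 0" unfolding ti_pair_def using indep2_if_det2_nonzero by simp_all
  thus "X \<in> conic_planes" unfolding conic_planes_def using h(2) by blast
next
  fix X assume "X \<in> conic_planes"
  then obtain u v where h: "ti_pair u v" "det2 u v \<noteq> 0" "X = plane (span2 u v)"
    unfolding conic_planes_def by blast
  define k where "k = w * det2 u v"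
  have "k \<in> FQ" "k \<noteq> 0" using h by (simp_all add: k_def ti_pair_def tr_eq_0_iff)
  hence k: "inverse k \<in> FQ" "inverse k \<noteq> 0" by simp_all
  have "det2 u (smul2 (inverse k) v) = inverse w"
    unfolding det2_smul2_right k_def using h(2) by (simp add: field_simps)
  moreover have "X = plane (span2 u (smul2 (inverse k) v))" unfolding span2_smul2_right[OF k] h(3) ..
  ultimately show "X \<in> (\<lambda>(u, v). plane (span2 u v)) ` frames" unfolding frames_def by force
qed

lemma frame_change_frames:
  assumes "det2 u0 v0 = inverse w" "s \<in> SL2q"
  shows "frame_change u0 v0 s \<in> frames \<and>
         span2 (fst (frame_change u0 v0 s)) (snd (frame_change u0 v0 s)) = span2 u0 v0"
proof -
  obtain a b c d where s: "s = (a, b, c, d)" "a \<in> FQ" "b \<in> FQ" "c \<in> FQ" "d \<in> FQ" "a * d + b * c = 1"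
    using assms(2) unfolding SL2q_def by auto
  define u where "u = add2 (smul2 a u0) (smul2 b v0)"
  define v where "v = add2 (smul2 c u0) (smul2 d v0)"
  have det: "det2 u v = inverse w" unfolding u_def v_def det2_comb assms(1) using s(6) by (simp add: mult.commute)
  have sub: "span2 u v \<subseteq> span2 u0 v0" unfolding u_def v_def using span2_comb s span2_subset by simp
  have "add2 (smul2 d u) (smul2 b v) = add2 (smul2 (a * d + b * c) u0) (smul2 (2 * (b * d)) v0)"
       "add2 (smul2 c u) (smul2 a v) = add2 (smul2 (2 * (a * c)) u0) (smul2 (a * d + b * c) v0)"
    unfolding u_def v_def add2_def smul2_def
    by (simp_all only: fst_conv snd_conv prod_eq_iff) (intro conjI; algebra)+
  hence "add2 (smul2 d u) (smul2 b v) = u0" "add2 (smul2 c u) (smul2 a v) = v0"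
    using s(6) by (simp_all add: two_eq_zero add2_def smul2_def)
  hence "span2 u0 v0 \<subseteq> span2 u v"
    using span2_subset[OF span2_comb[OF s(5,3), of u v] span2_comb[OF s(4,2), of u v]] by (simp only:)
  moreover have "frame_change u0 v0 s = (u, v)" unfolding frame_change_def s(1) u_def v_def by simp
  ultimately show ?thesis unfolding frames_def using det sub by auto
qed

lemma same_plane_frame_change:
  assumes "det2 u0 v0 = inverse w" "det2 u v = inverse w" "span2 u v = span2 u0 v0"
  shows "\<exists>s\<in>SL2q. (u, v) = frame_change u0 v0 s"
proof -
  obtain a b where ab: "u = add2 (smul2 a u0) (smul2 b v0)" "a \<in> FQ" "b \<in> FQ"
    using span2_left[of u v] assms(3) unfolding span2_def by blast
  obtain c d where cd: "v = add2 (smul2 c u0) (smul2 d v0)" "c \<in> FQ" "d \<in> FQ"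
    using span2_right[of v u] assms(3) unfolding span2_def by blast
  have "(a * d + c * b) * inverse w = inverse w" using assms(1,2) unfolding ab(1) cd(1) det2_comb by simp
  hence "a * d + b * c = 1" by (simp add: mult.commute)
  hence "(a, b, c, d) \<in> SL2q" unfolding SL2q_def using ab cd by simp
  thus ?thesis using ab(1) cd(1) unfolding frame_change_def by force
qed

lemma card_frames_fiber:
  assumes "(u0, v0) \<in> frames"
  shows "card {x \<in> frames. plane (span2 (fst x) (snd x)) = plane (span2 u0 v0)} = card SL2q"
proof -
  have D0: "det2 u0 v0 = inverse w" using assms by (simp add: frames_def)
  have "{x \<in> frames. plane (span2 (fst x) (snd x)) = plane (span2 u0 v0)} = frame_change u0 v0 ` SL2q"
  proof (intro set_eqI iffI)
    fix x assume "x \<in> {x \<in> frames. plane (span2 (fst x) (snd x)) = plane (span2 u0 v0)}"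
    then obtain u v where "x = (u, v)" "det2 u v = inverse w" "span2 u v = span2 u0 v0"
      unfolding frames_def plane_eq_iff by (cases x) auto
    thus "x \<in> frame_change u0 v0 ` SL2q" using same_plane_frame_change[OF D0] by blast
  next
    fix x assume "x \<in> frame_change u0 v0 ` SL2q"
    then obtain s where "s \<in> SL2q" "x = frame_change u0 v0 s" by blast
    thus "x \<in> {x \<in> frames. plane (span2 (fst x) (snd x)) = plane (span2 u0 v0)}"
      using frame_change_frames[OF D0] by simp
  qed
  moreover have "inj_on (frame_change u0 v0) SL2q"
  proof (rule inj_onI)
    fix s t assume st: "s \<in> SL2q" "t \<in> SL2q" "frame_change u0 v0 s = frame_change u0 v0 t"
    obtain a b c d a' b' c' d' where s: "s = (a, b, c, d)" and t: "t = (a', b', c', d')"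
      by (cases s, cases t) auto
    have F: "a \<in> FQ" "b \<in> FQ" "c \<in> FQ" "d \<in> FQ" "a' \<in> FQ" "b' \<in> FQ" "c' \<in> FQ" "d' \<in> FQ"
      using st(1,2) unfolding s t SL2q_def by auto
    have "add2 (smul2 a u0) (smul2 b v0) = add2 (smul2 a' u0) (smul2 b' v0)"
      "add2 (smul2 c u0) (smul2 d v0) = add2 (smul2 c' u0) (smul2 d' v0)"
      using st(3) unfolding s t frame_change_def by simp_all
    moreover have "indep2 u0 v0" using D0 indep2_if_det2_nonzero by simp
    ultimately show "s = t"
      using indep2_comb_inj[of u0 v0 a b a' b'] indep2_comb_inj[of u0 v0 c d c' d'] F unfolding s t by simp
  qed
  ultimately show ?thesis by (simp add: card_image)
qed

lemma card_conic_planes: "card conic_planes = q ^ 3 + q"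
proof -
  have "card frames = card ((\<lambda>(u, v). plane (span2 u v)) ` frames) * card SL2q"
  proof (rule card_eq_card_image_mult)
    show "finite frames" by (rule finite_subset[OF subset_UNIV]) simp
    fix y assume "y \<in> (\<lambda>(u, v). plane (span2 u v)) ` frames"
    then obtain u0 v0 where "(u0, v0) \<in> frames" "y = plane (span2 u0 v0)" by auto
    thus "card {x \<in> frames. (\<lambda>(u, v). plane (span2 u v)) x = y} = card SL2q"
      using card_frames_fiber by (simp add: case_prod_beta)
  qed
  hence "card conic_planes * card SL2q = (q ^ 3 + q) * card SL2q"
    unfolding plane_frames card_frames card_SL2q
    by (simp add: power2_eq_square power3_eq_cube algebra_simps)
  moreover have "card SL2q \<noteq> 0" unfolding card_SL2q using q_ge_2 by simp
  ultimately show ?thesis by simp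
qed

lemma Gorbit_WPlanesN: "Gorbit q w ` WPlanesN q w = {line_planes, conic_planes}"
proof -
  obtain \<pi>1 \<pi>2 where "\<pi>1 \<in> line_planes" "\<pi>2 \<in> conic_planes"
    using card_line_planes card_conic_planes q_ge_2 by fastforce
  moreover have "Gorbit q w \<pi> = line_planes" if "\<pi> \<in> line_planes" for \<pi>
    using that Gorbit_line_plane unfolding line_planes_def by blast
  hence "Gorbit q w ` line_planes = (\<lambda>_. line_planes) ` line_planes" by (rule image_cong[OF refl])
  moreover have "Gorbit q w \<pi> = conic_planes" if "\<pi> \<in> conic_planes" for \<pi>
    using that Gorbit_conic_plane unfolding conic_planes_def by blast
  hence "Gorbit q w ` conic_planes = (\<lambda>_. conic_planes) ` conic_planes" by (rule image_cong[OF refl])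
  moreover have "WPlanesN q w = line_planes \<union> conic_planes"
    unfolding WPlanesN_eq line_planes_def conic_planes_def by blast
  ultimately show ?thesis by (simp add: image_Un image_constant insert_commute)
qed

end

theorem mainTheorem12:
  fixes q n :: nat and \<omega> :: "'a::{field,finite}"
  assumes "n \<ge> 1" and "q = 2 ^ n" and "card (UNIV :: 'a set) = q ^ 2"
    and "\<omega> \<notin> Fq q" and "\<omega> + \<omega> ^ q = 1"
  shows "let P = WPlanesN q \<omega>;
             O1 = {\<pi> \<in> P. \<exists>L \<in> Spread q. \<pi> \<inter> Qpts q = L};
             O2 = {\<pi> \<in> P. nondeg_conic_in q \<pi> (\<pi> \<inter> Qpts q)}
         in Gorbit q \<omega> ` P = {O1, O2} \<and> card O1 = q ^ 2 + 1 \<and> card O2 = q ^ 3 + q"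
proof -
  interpret w5q q n \<omega> using assms by unfold_locales
  show ?thesis
    unfolding Let_def line_planes_eq conic_planes_eq
    using Gorbit_WPlanesN card_line_planes card_conic_planes by simp
qed

end
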